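(* Let $l\le m$ be integers. Then in $\wedge^{m-l+2}V_{\mathrm{aff}}$ one has $u_m\wedge u_{m-1}\wedge\cdots\wedge u_{l+1}\wedge u_l\wedge u_m=0$ and $u_l\wedge u_m\wedge u_{m-1}\wedge\cdots\wedge u_{l+1}\wedge u_l=0$.
   Context: Let $N,L\ge 1$ be integers, $q$ an indeterminate and $\mathbb K=\mathbb Q(q^{1/(2N)})$. Let $\mathbb K^L$ have basis $\mathfrak e_1,\dots,\mathfrak e_L$, $\mathbb K^N$ have basis $\mathfrak v_1,\dots,\mathfrak v_N$, and $V_{\mathrm{aff}}=\mathbb K[z^{\pm1}]\otimes\mathbb K^L\otimes\mathbb K^N$, with basis $z^m\mathfrak e_a\mathfrak v_\epsilon$. Identify $V_{\mathrm{aff}}^{\otimes n}=(\mathbb K[z^{\pm1}]\otimes\mathbb K^L)^{\otimes n}\otimes(\mathbb K^N)^{\otimes n}$, and $(\mathbb K[z^{\pm1}]\otimes\mathbb K^L)^{\otimes n}=\mathbb K[z_1^{\pm1},\dots,z_n^{\pm1}]\otimes(\mathbb K^L)^{\otimes n}$ via $z^{m_1}\mathfrak e_{a_1}\otimes\cdots\otimes z^{m_n}\mathfrak e_{a_n}\mapsto z_1^{m_1}\cdots z_n^{m_n}\otimes\mathfrak e_{a_1}\otimes\cdots\otimes\mathfrak e_{a_n}$. With $E_{a,b}$ the matrix units of $\mathbb K^L$ put $R(z_1,z_2)=(q^2z_1-z_2)\sum_{a}E_{a,a}\otimes E_{a,a}+q(z_1-z_2)\sum_{a\neq b}E_{a,a}\otimes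 E_{b,b}+z_1(q^2-1)\sum_{a<b}E_{a,b}\otimes E_{b,a}+z_2(q^2-1)\sum_{a>b}E_{a,b}\otimes E_{b,a}$, let $s$ be the operator exchanging the two tensor factors of $(\mathbb K[z^{\pm1}]\otimes\mathbb K^L)^{\otimes 2}$, and $\overset{c}{T}=\frac{z_1-q^2z_2}{z_1-z_2}\bigl(1-s\cdot\frac{R(z_1,z_2)}{q^2z_1-z_2}\bigr)-1$ (a well-defined operator on $\mathbb K[z_1^{\pm1},z_2^{\pm1}]\otimes(\mathbb K^L)^{\otimes2}$). Let $\overset{s}{T}$ on $(\mathbb K^N)^{\otimes 2}$ send $\mathfrak v_{\epsilon_1}\otimes\mathfrak v_{\epsilon_2}$ to $q^2\mathfrak v_{\epsilon_1}\otimes\mathfrak v_{\epsilon_2}$ if $\epsilon_1=\epsilon_2$, to $q\,\mathfrak v_{\epsilon_2}\otimes\mathfrak v_{\epsilon_1}$ if $\epsilon_1<\epsilon_2$, and to $q\,\mathfrak v_{\epsilon_2}\otimes\mathfrak v_{\epsilon_1}+(q^2-1)\mathfrak v_{\epsilon_1}\otimes\mathfrak v_{\epsilon_2}$ if $\epsilon_1>\epsilon_2$. For $1\le i<n$ let $\overset{c}{T}_i$ (resp. $\overset{s}{T}_i$) be $\overset{c}{T}$ (resp. $\overset{s}{T}$) acting in the $i$th and $(i+1)$st tensor factors of $(\mathbb K[z^{\pm1}]\otimes\mathbb K^L)^{\otimes n}$ (resp. $(\mathbb K^N)^{\otimes n}$), extended to $V_{\mathrm{aff}}^{\otimes n}$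 by the identity on the other factor. The ($q$-)wedge product is $\wedge^nV_{\mathrm{aff}}=V_{\mathrm{aff}}^{\otimes n}/\sum_{i=1}^{n-1}\mathrm{Im}(\overset{c}{T}_i-\overset{s}{T}_i)$, with quotient map denoted $\wedge$. Every $k\in\mathbb Z$ is written uniquely as $k=\bar k-N(\dot k+L\underline k)$ with $\bar k\in\{1,\dots,N\}$, $\dot k\in\{1,\dots,L\}$, $\underline k\in\mathbb Z$; put $u_k=z^{\underline k}\mathfrak e_{\dot k}\mathfrak v_{\bar k}$, so $\{u_k\}_{k\in\mathbb Z}$ is a basis of $V_{\mathrm{aff}}$. The wedge $u_{k_1}\wedge\cdots\wedge u_{k_n}$ is the image of $u_{k_1}\otimes\cdots\otimes u_{k_n}$; it is called normally ordered if $k_1>k_2>\cdots>k_n$. *)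

theory Defs
  imports "HOL-Computational_Algebra.Polynomial" "HOL-Computational_Algebra.Fraction_Field"
begin

(* The field K = Q(q^(1/(2N))) is modelled as Q(t) (rational functions in t),
   with q^(1/(2N)) = t and q = t^(2N). *)
type_synonym fld = "rat poly fract"

definition qroot :: fld where "qroot = Fract [:0, 1:] 1"
definition qpar :: "nat \<Rightarrow> fld" where "qpar N = qroot ^ (2 * N)"

(* Basis of V_aff^{\<otimes> n}: lists of length n of triples (m, a, eps), the j-th triple
   standing for z^m e_a v_eps in the j-th tensor factor (positions 0-based). *)
type_synonym idx = "(int \<times> nat \<times> nat) list"
type_synonym tensor = "idx \<Rightarrow> fld"

definition tsupp :: "tensor \<Rightarrow> idx set" where "tsupp v = {k. v k \<noteq> 0}"

definition valid_idx :: "nat \<Rightarrow> nat \<Rightarrow> nat \<Rightarrow> idx \<Rightarrow> bool" where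
  "valid_idx N L n k \<longleftrightarrow> length k = n \<and>
     (\<forall>j<n. case k ! j of (m, a, e) \<Rightarrow> 1 \<le> a \<and> a \<le> L \<and> 1 \<le> e \<and> e \<le> N)"

definition is_tensor :: "nat \<Rightarrow> nat \<Rightarrow> nat \<Rightarrow> tensor \<Rightarrow> bool" where
  "is_tensor N L n v \<longleftrightarrow> finite (tsupp v) \<and> (\<forall>k. v k \<noteq> 0 \<longrightarrow> valid_idx N L n k)"

definition tdelta :: "idx \<Rightarrow> tensor" where "tdelta k0 = (\<lambda>k. if k = k0 then 1 else 0)"
definition tadd :: "tensor \<Rightarrow> tensor \<Rightarrow> tensor" where "tadd v w = (\<lambda>k. v k + w k)"
definition tsub :: "tensor \<Rightarrow> tensor \<Rightarrow> tensor" where "tsub v w = (\<lambda>k. v k - w k)"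
definition smul :: "fld \<Rightarrow> tensor \<Rightarrow> tensor" where "smul c v = (\<lambda>k. c * v k)"

definition lin_ext :: "(idx \<Rightarrow> tensor) \<Rightarrow> tensor \<Rightarrow> tensor" where
  "lin_ext f v = (\<lambda>k. \<Sum>k'\<in>tsupp v. v k' * f k' k)"

definition sT_basis :: "nat \<Rightarrow> nat \<Rightarrow> idx \<Rightarrow> tensor" where
  "sT_basis N i k = (case k ! i of (m1, a1, e1) \<Rightarrow> case k ! Suc i of (m2, a2, e2) \<Rightarrow>
     (let q = qpar N; ksw = k[i := (m1, a1, e2), Suc i := (m2, a2, e1)] in
      if e1 = e2 then smul (q^2) (tdelta k)
      else if e1 < e2 then smul q (tdelta ksw)
      else tadd (smul q (tdelta ksw)) (smul (q^2 - 1) (tdelta k))))"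

definition sT :: "nat \<Rightarrow> nat \<Rightarrow> tensor \<Rightarrow> tensor" where
  "sT N i = lin_ext (sT_basis N i)"

(* multiplication by z_j (variable of the j-th factor) *)
definition zmul :: "nat \<Rightarrow> tensor \<Rightarrow> tensor" where
  "zmul j v = (\<lambda>k. if j < length k then (case k ! j of (m, a, e) \<Rightarrow> v (k[j := (m - 1, a, e)])) else 0)"

(* the flip s of the (K[z^{\<plusminus>1}] \<otimes> K^L)-parts of positions i, i+1 *)
definition sflip :: "nat \<Rightarrow> tensor \<Rightarrow> tensor" where
  "sflip i v = (\<lambda>k. if Suc i < length k then
      (case k ! i of (m1, a1, e1) \<Rightarrow> case k ! Suc i of (m2, a2, e2) \<Rightarrow>
         v (k[i := (m2, a2, e1), Suc i := (m1, a1, e2)])) else 0)"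

(* R(z_i, z_{i+1}) acting on the K^L-parts of positions i, i+1 *)
definition R_basis :: "nat \<Rightarrow> nat \<Rightarrow> idx \<Rightarrow> tensor" where
  "R_basis N i k = (case k ! i of (m1, a1, e1) \<Rightarrow> case k ! Suc i of (m2, a2, e2) \<Rightarrow>
     (let q = qpar N; d = tdelta k; kc = tdelta (k[i := (m1, a2, e1), Suc i := (m2, a1, e2)]) in
      if a1 = a2 then tsub (smul (q^2) (zmul i d)) (zmul (Suc i) d)
      else tadd (smul q (tsub (zmul i d) (zmul (Suc i) d)))
                (smul (q^2 - 1) (if a2 < a1 then zmul i kc else zmul (Suc i) kc))))"

definition Rop :: "nat \<Rightarrow> nat \<Rightarrow> tensor \<Rightarrow> tensor" where
  "Rop N i = lin_ext (R_basis N i)"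

definition dprime :: "nat \<Rightarrow> nat \<Rightarrow> tensor \<Rightarrow> tensor" where
  "dprime N i v = tsub (smul ((qpar N)^2) (zmul (Suc i) v)) (zmul i v)"

(* cT_i v = w is the (unique) w with
   (z_i - z_{i+1})(q^2 z_{i+1} - z_i)(w + v) = (z_i - q^2 z_{i+1})((q^2 z_{i+1} - z_i) v - s(R v)),
   which is the defining formula cT = (z1-q^2z2)/(z1-z2) (1 - s R/(q^2 z1 - z2)) - 1
   cleared of denominators (using s(f/g) = s f / s g). *)
definition cT :: "nat \<Rightarrow> nat \<Rightarrow> nat \<Rightarrow> nat \<Rightarrow> tensor \<Rightarrow> tensor" where
  "cT N L n i v = (THE w. is_tensor N L n w \<and>
     tsub (zmul i (dprime N i (tadd w v))) (zmul (Suc i) (dprime N i (tadd w v))) =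
     (let X = tsub (dprime N i v) (sflip i (Rop N i v)) in
        tsub (zmul i X) (smul ((qpar N)^2) (zmul (Suc i) X))))"

(* u_k = z^{underline k} e_{dot k} v_{bar k}, with k = bar k - N (dot k + L underline k) *)
definition u_idx :: "nat \<Rightarrow> nat \<Rightarrow> int \<Rightarrow> int \<times> nat \<times> nat" where
  "u_idx N L k = (THE t. case t of (mm, a, e) \<Rightarrow>
      1 \<le> a \<and> a \<le> L \<and> 1 \<le> e \<and> e \<le> N \<and> k = int e - int N * (int a + int L * mm))"

(* u_{k_1} \<wedge> ... \<wedge> u_{k_n} = 0 iff u_{k_1} \<otimes> ... \<otimes> u_{k_n} lies in
   \<Sum>_{i} Im(cT_i - sT_i)   (positions i, i+1 with 0 \<le> i < n-1) *)
definition wedge_zero :: "nat \<Rightarrow> nat \<Rightarrow> int list \<Rightarrow> bool" where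
  "wedge_zero N L ks \<longleftrightarrow> (let n = length ks in
     \<exists>x. (\<forall>i. is_tensor N L n (x i)) \<and>
       tdelta (map (u_idx N L) ks) = (\<lambda>k. \<Sum>i<n - 1. cT N L n i (x i) k - sT N i (x i) k))"

end

(* The relations are spanned by the vectors (cT_i - sT_i) applied to basis tensors.  As cT is
   only characterised implicitly, it is first computed on a basis tensor: dividing its defining
   equation by z_i - z_(i+1) expresses it through divided differences of monomials, and the
   solution is unique because z_i - z_(i+1) and q^2 z_(i+1) - z_i are injective on Laurent
   polynomials.  Applied to the basis tensor obtained from u_l (x) u_m (l <= m) by exchanging the
   z^p e_a-parts, cT_i - sT_i has a nonzero coefficient at u_l (x) u_m and otherwise involves only
   u_a (x) u_b with l < a <= m and l <= b < m.  Hence, modulo relations, u_l /\ u_m is a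
   combination of such u_a /\ u_b, and both wedges vanish by induction on m - l: rewriting the
   pair u_l /\ u_m at the end (resp. the start) of the word leaves a shorter run
   u_a /\ ... /\ u_a (resp. u_b /\ ... /\ u_b) inside it. *)

theory Submission
  imports Defs
begin

section \<open>Tensors in two adjacent factors\<close>

type_synonym fidx = "int \<times> nat \<times> nat"
type_synonym ptensor = "fidx \<Rightarrow> fidx \<Rightarrow> fld"

definition set_pair :: "nat \<Rightarrow> idx \<Rightarrow> fidx \<Rightarrow> fidx \<Rightarrow> idx" where
  "set_pair i k x y = k[i := x, Suc i := y]"

definition same_outside :: "nat \<Rightarrow> idx \<Rightarrow> idx \<Rightarrow> bool" where
  "same_outside i k k' \<longleftrightarrow> (\<exists>x y. k' = set_pair i k x y)"

definition embed_pair :: "nat \<Rightarrow> idx \<Rightarrow> ptensor \<Rightarrow> tensor" where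
  "embed_pair i k \<phi> = (\<lambda>k'. if same_outside i k k' then \<phi> (k' ! i) (k' ! Suc i) else 0)"

definition exp_dec :: "fidx \<Rightarrow> fidx" where "exp_dec t = (case t of (p, a, e) \<Rightarrow> (p - 1, a, e))"
definition exp_inc :: "fidx \<Rightarrow> fidx" where "exp_inc t = (case t of (p, a, e) \<Rightarrow> (p + 1, a, e))"

lemma exp_dec_simp [simp]: "exp_dec (p, a, e) = (p - 1, a, e)"
  by (simp add: exp_dec_def)
lemma exp_inc_simp [simp]: "exp_inc (p, a, e) = (p + 1, a, e)"
  by (simp add: exp_inc_def)
lemma exp_dec_inc [simp]: "exp_dec (exp_inc t) = t" "exp_inc (exp_dec t) = t"
  by (cases t; auto)+
lemma exp_dec_eq_iff: "exp_dec x = y \<longleftrightarrow> x = exp_inc y"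
  by (cases x; cases y; auto)

definition pdelta :: "fidx \<Rightarrow> fidx \<Rightarrow> ptensor" where
  "pdelta x y = (\<lambda>a b. if a = x \<and> b = y then 1 else 0)"
definition pz1 :: "ptensor \<Rightarrow> ptensor" where "pz1 \<phi> = (\<lambda>a b. \<phi> (exp_dec a) b)"
definition pz2 :: "ptensor \<Rightarrow> ptensor" where "pz2 \<phi> = (\<lambda>a b. \<phi> a (exp_dec b))"

definition flip1 :: "fidx \<Rightarrow> fidx \<Rightarrow> fidx" where
  "flip1 x y = (case x of (m1, a1, e1) \<Rightarrow> case y of (m2, a2, e2) \<Rightarrow> (m2, a2, e1))"
definition flip2 :: "fidx \<Rightarrow> fidx \<Rightarrow> fidx" where
  "flip2 x y = (case x of (m1, a1, e1) \<Rightarrow> case y of (m2, a2, e2) \<Rightarrow> (m1, a1, e2))"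
definition pflip :: "ptensor \<Rightarrow> ptensor" where "pflip \<phi> = (\<lambda>a b. \<phi> (flip1 a b) (flip2 a b))"

definition padd :: "ptensor \<Rightarrow> ptensor \<Rightarrow> ptensor" where "padd \<phi> \<psi> = (\<lambda>a b. \<phi> a b + \<psi> a b)"
definition psub :: "ptensor \<Rightarrow> ptensor \<Rightarrow> ptensor" where "psub \<phi> \<psi> = (\<lambda>a b. \<phi> a b - \<psi> a b)"
definition psmul :: "fld \<Rightarrow> ptensor \<Rightarrow> ptensor" where "psmul c \<phi> = (\<lambda>a b. c * \<phi> a b)"

lemma flip_simps [simp]:
  "flip1 (m1, a1, e1) (m2, a2, e2) = (m2, a2, e1)" "flip2 (m1, a1, e1) (m2, a2, e2) = (m1, a1, e2)"
  by (simp_all add: flip1_def flip2_def)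

lemma flip_flip: "flip1 (flip1 x y) (flip2 x y) = x" "flip2 (flip1 x y) (flip2 x y) = y"
  by (cases x; cases y; simp)+

lemma length_set_pair [simp]: "length (set_pair i k x y) = length k"
  by (simp add: set_pair_def)
lemma set_pair_nth1 [simp]: "Suc i < length k \<Longrightarrow> set_pair i k x y ! i = x"
  by (simp add: set_pair_def)
lemma set_pair_nth2 [simp]: "Suc i < length k \<Longrightarrow> set_pair i k x y ! Suc i = y"
  by (simp add: set_pair_def)
lemma set_pair_set_pair [simp]: "set_pair i (set_pair i k x y) x' y' = set_pair i k x' y'"
  by (simp add: set_pair_def list_update_swap)
lemma set_pair_update1 [simp]: "(set_pair i k x y)[i := w] = set_pair i k w y"
  unfolding set_pair_def by (metis list_update_overwrite list_update_swap n_not_Suc_n)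
lemma set_pair_update2 [simp]: "(set_pair i k x y)[Suc i := w] = set_pair i k x w"
  by (simp add: set_pair_def)
lemma set_pair_self: "Suc i < length k \<Longrightarrow> set_pair i k (k ! i) (k ! Suc i) = k"
  by (simp add: set_pair_def)
lemma set_pair_eq_iff [simp]:
  "Suc i < length k \<Longrightarrow> set_pair i k x y = set_pair i k x' y' \<longleftrightarrow> x = x' \<and> y = y'"
  by (metis set_pair_nth1 set_pair_nth2)

lemma same_outside_set_pair [simp]: "same_outside i k (set_pair i k x y)"
  unfolding same_outside_def by blast
lemma same_outside_base [simp]: "same_outside i (set_pair i k x y) k' = same_outside i k k'"
  by (auto simp: same_outside_def)

lemma embed_pair_base [simp]: "embed_pair i (set_pair i k x y) = embed_pair i k"
  by (simp add: embed_pair_def fun_eq_iff)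
lemma embed_pair_set_pair [simp]: "Suc i < length k \<Longrightarrow> embed_pair i k \<phi> (set_pair i k x y) = \<phi> x y"
  by (simp add: embed_pair_def)
lemma embed_pair_outside: "\<not> same_outside i k k' \<Longrightarrow> embed_pair i k \<phi> k' = 0"
  by (simp add: embed_pair_def)

lemma embed_pair_cases:
  assumes "Suc i < length k"
  obtains x y where "k' = set_pair i k x y" "embed_pair i k \<phi> k' = \<phi> x y"
    | "\<not> same_outside i k k'" "embed_pair i k \<phi> k' = 0"
proof (cases "same_outside i k k'")
  case True
  then obtain x y where "k' = set_pair i k x y"
    unfolding same_outside_def by blast
  then show ?thesis using that(1)[of x y] assms by simp
next
  case False
  then show ?thesis using that(2) by (simp add: embed_pair_outside)
qed

lemma tdelta_set_pair:
  assumes "Suc i < length k"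
  shows "tdelta (set_pair i k x y) = embed_pair i k (pdelta x y)"
proof
  fix k'
  show "tdelta (set_pair i k x y) k' = embed_pair i k (pdelta x y) k'"
    by (rule embed_pair_cases[OF assms, of k'])
      (auto simp: tdelta_def pdelta_def same_outside_def assms)
qed

lemma tdelta_eq_embed: "Suc i < length k \<Longrightarrow> tdelta k = embed_pair i k (pdelta (k ! i) (k ! Suc i))"
  using tdelta_set_pair[of i k "k ! i" "k ! Suc i"] by (simp add: set_pair_self)

lemma tadd_embed: "tadd (embed_pair i k \<phi>) (embed_pair i k \<psi>) = embed_pair i k (padd \<phi> \<psi>)"
  by (auto simp: tadd_def embed_pair_def padd_def fun_eq_iff)
lemma tsub_embed: "tsub (embed_pair i k \<phi>) (embed_pair i k \<psi>) = embed_pair i k (psub \<phi> \<psi>)"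
  by (auto simp: tsub_def embed_pair_def psub_def fun_eq_iff)
lemma smul_embed: "smul c (embed_pair i k \<phi>) = embed_pair i k (psmul c \<phi>)"
  by (auto simp: smul_def embed_pair_def psmul_def fun_eq_iff)

lemma update_not_same_outside:
  assumes "Suc i < length k" "\<not> same_outside i k k'" "j = i \<or> j = Suc i" "j < length k'"
  shows "\<not> same_outside i k (k'[j := z])"
proof
  assume "same_outside i k (k'[j := z])"
  then obtain x y where e: "k'[j := z] = set_pair i k x y"
    by (auto simp: same_outside_def)
  have "k' = (k'[j := z])[j := k' ! j]" using assms(4) by simp
  also have "\<dots> = set_pair i k (if j = i then k' ! j else x) (if j = i then y else k' ! j)"
    using e assms(3) by auto
  finally show False using assms(2) unfolding same_outside_def by blast
qed

lemma zmul_alt: "zmul j f k = (if j < length k then f (k[j := exp_dec (k ! j)]) else 0)"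
  by (cases "k ! j") (simp add: zmul_def)

lemma sflip_alt:
  "sflip i f k = (if Suc i < length k
     then f (k[i := flip1 (k ! i) (k ! Suc i), Suc i := flip2 (k ! i) (k ! Suc i)]) else 0)"
  by (cases "k ! i"; cases "k ! Suc i") (simp add: sflip_def)

lemma zmul1_embed:
  assumes "Suc i < length k"
  shows "zmul i (embed_pair i k \<phi>) = embed_pair i k (pz1 \<phi>)"
proof
  fix k'
  show "zmul i (embed_pair i k \<phi>) k' = embed_pair i k (pz1 \<phi>) k'"
  proof (cases "same_outside i k k'")
    case True
    then obtain x y where k': "k' = set_pair i k x y"
      by (auto simp: same_outside_def)
    then have "k'[i := exp_dec (k' ! i)] = set_pair i k (exp_dec x) y"
      using assms by simp
    then show ?thesis using k' assms by (simp add: zmul_alt pz1_def)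
  next
    case False
    then show ?thesis using update_not_same_outside[OF assms False]
      by (auto simp: zmul_alt embed_pair_outside)
  qed
qed

lemma zmul2_embed:
  assumes "Suc i < length k"
  shows "zmul (Suc i) (embed_pair i k \<phi>) = embed_pair i k (pz2 \<phi>)"
proof
  fix k'
  show "zmul (Suc i) (embed_pair i k \<phi>) k' = embed_pair i k (pz2 \<phi>) k'"
  proof (cases "same_outside i k k'")
    case True
    then obtain x y where k': "k' = set_pair i k x y"
      by (auto simp: same_outside_def)
    then have "k'[Suc i := exp_dec (k' ! Suc i)] = set_pair i k x (exp_dec y)"
      using assms by simp
    then show ?thesis using k' assms by (simp add: zmul_alt pz2_def)
  next
    case False
    then show ?thesis using update_not_same_outside[OF assms False]
      by (auto simp: zmul_alt embed_pair_outside)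
  qed
qed

lemma sflip_embed:
  assumes "Suc i < length k"
  shows "sflip i (embed_pair i k \<phi>) = embed_pair i k (pflip \<phi>)"
proof
  fix k'
  show "sflip i (embed_pair i k \<phi>) k' = embed_pair i k (pflip \<phi>) k'"
  proof (cases "same_outside i k k'")
    case True
    then obtain x y where k': "k' = set_pair i k x y"
      by (auto simp: same_outside_def)
    then show ?thesis using assms by (simp add: sflip_alt pflip_def set_pair_def[symmetric])
  next
    case False
    have "\<not> same_outside i k (k'[i := z, Suc i := z'])" if "Suc i < length k'" for z z'
      using update_not_same_outside[OF assms update_not_same_outside[OF assms False, of i z],
          of "Suc i" z'] that by auto
    then show ?thesis using False by (auto simp: sflip_alt embed_pair_outside)
  qed
qed

definition R_pair :: "nat \<Rightarrow> fidx \<Rightarrow> fidx \<Rightarrow> ptensor" where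
  "R_pair N x y = (case x of (m1, a1, e1) \<Rightarrow> case y of (m2, a2, e2) \<Rightarrow>
     (let q = qpar N; d = pdelta x y; dc = pdelta (m1, a2, e1) (m2, a1, e2) in
      if a1 = a2 then psub (psmul (q^2) (pz1 d)) (pz2 d)
      else padd (psmul q (psub (pz1 d) (pz2 d)))
                (psmul (q^2 - 1) (if a2 < a1 then pz1 dc else pz2 dc))))"

definition sT_pair :: "nat \<Rightarrow> fidx \<Rightarrow> fidx \<Rightarrow> ptensor" where
  "sT_pair N x y = (case x of (m1, a1, e1) \<Rightarrow> case y of (m2, a2, e2) \<Rightarrow>
     (let q = qpar N; ds = pdelta (m1, a1, e2) (m2, a2, e1) in
      if e1 = e2 then psmul (q^2) (pdelta x y)
      else if e1 < e2 then psmul q ds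
      else padd (psmul q ds) (psmul (q^2 - 1) (pdelta x y))))"

lemma R_basis_eq_embed:
  assumes "Suc i < length k"
  shows "R_basis N i k = embed_pair i k (R_pair N (k ! i) (k ! Suc i))"
proof -
  obtain m1 a1 e1 where 1: "k ! i = (m1, a1, e1)" by (cases "k ! i") auto
  obtain m2 a2 e2 where 2: "k ! Suc i = (m2, a2, e2)" by (cases "k ! Suc i") auto
  have d: "tdelta k = embed_pair i k (pdelta (m1, a1, e1) (m2, a2, e2))"
    using tdelta_eq_embed[OF assms] 1 2 by simp
  note dc = tdelta_set_pair[OF assms, of "(m1, a2, e1)" "(m2, a1, e2)", unfolded set_pair_def]
  show ?thesis
    unfolding R_basis_def R_pair_def 1 2 Let_def d dc prod.case
    by (simp add: zmul1_embed[OF assms] zmul2_embed[OF assms] tsub_embed tadd_embed smul_embed)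
qed

lemma sT_basis_eq_embed:
  assumes "Suc i < length k"
  shows "sT_basis N i k = embed_pair i k (sT_pair N (k ! i) (k ! Suc i))"
proof -
  obtain m1 a1 e1 where 1: "k ! i = (m1, a1, e1)" by (cases "k ! i") auto
  obtain m2 a2 e2 where 2: "k ! Suc i = (m2, a2, e2)" by (cases "k ! Suc i") auto
  have d: "tdelta k = embed_pair i k (pdelta (m1, a1, e1) (m2, a2, e2))"
    using tdelta_eq_embed[OF assms] 1 2 by simp
  note ds = tdelta_set_pair[OF assms, of "(m1, a1, e2)" "(m2, a2, e1)", unfolded set_pair_def]
  show ?thesis
    unfolding sT_basis_def sT_pair_def 1 2 Let_def d ds prod.case
    by (simp add: tadd_embed smul_embed)
qed

text \<open>\<open>divdiff x y\<close> is the divided difference \<open>(z1^p1 z2^p2 - z1^p2 z2^p1) / (z1 - z2)\<close> for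
  \<open>x = (p1, _)\<close>, \<open>y = (p2, _)\<close>, with the \<open>e_a v_e\<close>-parts of \<open>x\<close> and \<open>y\<close> in the two factors.\<close>
definition divdiff_coeff :: "int \<Rightarrow> int \<Rightarrow> int \<Rightarrow> fld" where
  "divdiff_coeff p1 p2 j = (if p2 \<le> j \<and> j < p1 then 1 else if p1 \<le> j \<and> j < p2 then -1 else 0)"

definition divdiff :: "fidx \<Rightarrow> fidx \<Rightarrow> ptensor" where
  "divdiff x y = (\<lambda>a b. if snd a = snd x \<and> snd b = snd y \<and> fst a + fst b = fst x + fst y - 1
      then divdiff_coeff (fst x) (fst y) (fst a) else 0)"

lemma divdiff_coeff_diff:
  "divdiff_coeff p1 p2 (j - 1) - divdiff_coeff p1 p2 j = (if j = p1 then 1 else 0) - (if j = p2 then 1 else 0)"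
  by (simp add: divdiff_coeff_def)

lemma divdiff_times_diff:
  "divdiff s t (exp_dec x) y - divdiff s t x (exp_dec y)
     = pdelta s t x y - pdelta (fst t, snd s) (fst s, snd t) x y"
proof -
  obtain p1 r1 p2 r2 xp xr yp yr where
    s: "s = (p1, r1)" and t: "t = (p2, r2)" and x: "x = (xp, xr)" and y: "y = (yp, yr)"
    by (cases s; cases t; cases x; cases y)
  have dec: "exp_dec (xp, xr) = (xp - 1, xr)" "exp_dec (yp, yr) = (yp - 1, yr)"
    by (cases xr; simp) (cases yr; simp)
  have "divdiff s t (exp_dec x) y - divdiff s t x (exp_dec y)
      = (if xr = r1 \<and> yr = r2 \<and> xp + yp = p1 + p2
         then divdiff_coeff p1 p2 (xp - 1) - divdiff_coeff p1 p2 xp else 0)"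
    unfolding s t x y divdiff_def dec fst_conv snd_conv by auto
  moreover have "pdelta s t x y - pdelta (fst t, snd s) (fst s, snd t) x y
      = (if xr = r1 \<and> yr = r2 \<and> xp + yp = p1 + p2
         then (if xp = p1 then 1 else 0) - (if xp = p2 then 1 else 0) else 0)"
    unfolding s t x y pdelta_def fst_conv snd_conv by auto
  ultimately show ?thesis
    by (simp only: divdiff_coeff_diff)
qed

lemma divdiff_exp_dec1:
  "divdiff s t (exp_dec x) y
     = divdiff s t x (exp_dec y) + pdelta s t x y - pdelta (fst t, snd s) (fst s, snd t) x y"
  using divdiff_times_diff[of s t x y] by (simp add: algebra_simps)

lemma pdelta_exp_dec1: "pdelta s t (exp_dec x) y = pdelta (exp_inc s) t x y"
  by (simp add: pdelta_def exp_dec_eq_iff)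
lemma pdelta_exp_dec2: "pdelta s t x (exp_dec y) = pdelta s (exp_inc t) x y"
  by (simp add: pdelta_def exp_dec_eq_iff)
lemma pdelta_flip: "pdelta s t (flip1 x y) (flip2 x y) = pdelta (flip1 s t) (flip2 s t) x y"
  unfolding pdelta_def by (metis flip_flip)

text \<open>The value of \<open>cT\<close> on a basis vector, obtained by dividing the defining equation of \<open>cT\<close>
  by \<open>z1 - z2\<close>: the quotient \<open>s R(z1, z2) / (z1 - z2)\<close> is a sum of divided differences.\<close>
definition cT_pair :: "nat \<Rightarrow> fidx \<Rightarrow> fidx \<Rightarrow> ptensor" where
  "cT_pair N x y = (case x of (p1, a1, e1) \<Rightarrow> case y of (p2, a2, e2) \<Rightarrow>
     (let q = qpar N in
      if a1 = a2 then psub (psub (pz1 (divdiff x y)) (psmul (q^2) (pz2 (divdiff x y)))) (pdelta x y)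
      else psub (psmul (-q) (pdelta (p2, a2, e1) (p1, a1, e2)))
                (psmul (q^2 - 1) (if a2 < a1 then pz2 (divdiff x y) else divdiff x (p2 + 1, a2, e2)))))"

definition dprime_pair :: "nat \<Rightarrow> ptensor \<Rightarrow> ptensor" where
  "dprime_pair N \<phi> = psub (psmul ((qpar N)^2) (pz2 \<phi>)) (pz1 \<phi>)"

lemma cT_pair_equation:
  "psub (pz1 (padd (cT_pair N x y) (pdelta x y))) (pz2 (padd (cT_pair N x y) (pdelta x y)))
   = psub (pflip (R_pair N x y)) (dprime_pair N (pdelta x y))"
proof (intro ext)
  fix a b
  obtain p1 a1 e1 p2 a2 e2 where x: "x = (p1, a1, e1)" and y: "y = (p2, a2, e2)"
    by (cases x; cases y) auto
  show "psub (pz1 (padd (cT_pair N x y) (pdelta x y))) (pz2 (padd (cT_pair N x y) (pdelta x y))) a b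
      = psub (pflip (R_pair N x y)) (dprime_pair N (pdelta x y)) a b"
    unfolding x y cT_pair_def R_pair_def dprime_pair_def Let_def
    by (cases "a1 = a2")
      (simp_all add: psub_def padd_def psmul_def pz1_def pz2_def pflip_def divdiff_exp_dec1
        pdelta_exp_dec1 pdelta_exp_dec2 pdelta_flip algebra_simps)
qed

lemma zmul_tadd: "zmul j (tadd a b) = tadd (zmul j a) (zmul j b)"
  by (auto simp: zmul_alt tadd_def fun_eq_iff)
lemma zmul_tsub: "zmul j (tsub a b) = tsub (zmul j a) (zmul j b)"
  by (auto simp: zmul_alt tsub_def fun_eq_iff)
lemma zmul_smul: "zmul j (smul c a) = smul c (zmul j a)"
  by (auto simp: zmul_alt smul_def fun_eq_iff)
lemma zmul_commute: "i \<noteq> j \<Longrightarrow> zmul i (zmul j f) = zmul j (zmul i f)"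
  by (simp add: zmul_alt list_update_swap fun_eq_iff)

lemma sflip_tadd: "sflip i (tadd a b) = tadd (sflip i a) (sflip i b)"
  by (auto simp: sflip_alt tadd_def fun_eq_iff)
lemma sflip_smul: "sflip i (smul c a) = smul c (sflip i a)"
  by (auto simp: sflip_alt smul_def fun_eq_iff)

lemma dprime_tadd: "dprime N i (tadd a b) = tadd (dprime N i a) (dprime N i b)"
  by (auto simp: dprime_def zmul_alt tadd_def tsub_def smul_def fun_eq_iff algebra_simps)
lemma dprime_smul: "dprime N i (smul c a) = smul c (dprime N i a)"
  by (auto simp: dprime_def zmul_alt tsub_def smul_def fun_eq_iff algebra_simps)

lemma tsub_tadd_tadd: "tsub (tadd a b) (tadd c d) = tadd (tsub a c) (tsub b d)"
  by (simp add: tsub_def tadd_def fun_eq_iff)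
lemma smul_tadd: "smul c (tadd a b) = tadd (smul c a) (smul c b)"
  by (simp add: smul_def tadd_def fun_eq_iff algebra_simps)
lemma tsub_smul: "tsub (smul c a) (smul c b) = smul c (tsub a b)"
  by (simp add: smul_def tsub_def fun_eq_iff algebra_simps)
lemma smul_commute: "smul c (smul d a) = smul d (smul c a)"
  by (simp add: smul_def fun_eq_iff algebra_simps)

lemma tsupp_tadd: "tsupp (tadd a b) \<subseteq> tsupp a \<union> tsupp b"
  by (auto simp: tsupp_def tadd_def)
lemma tsupp_tsub: "tsupp (tsub a b) \<subseteq> tsupp a \<union> tsupp b"
  by (auto simp: tsupp_def tsub_def)
lemma tsupp_smul: "tsupp (smul c a) \<subseteq> tsupp a"
  by (auto simp: tsupp_def smul_def)
lemma tsupp_zmul: "tsupp (zmul j f) \<subseteq> (\<lambda>k. k[j := exp_inc (k ! j)]) ` tsupp f"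
proof
  fix k
  assume "k \<in> tsupp (zmul j f)"
  then have j: "j < length k" and nz: "f (k[j := exp_dec (k ! j)]) \<noteq> 0"
    by (auto simp: tsupp_def zmul_alt split: if_splits)
  have "k = (k[j := exp_dec (k ! j)])[j := exp_inc ((k[j := exp_dec (k ! j)]) ! j)]"
    using j by simp
  then show "k \<in> (\<lambda>k. k[j := exp_inc (k ! j)]) ` tsupp f"
    using nz by (intro image_eqI[where x = "k[j := exp_dec (k ! j)]"]) (auto simp: tsupp_def)
qed

lemma finite_tsupp_zmul: "finite (tsupp f) \<Longrightarrow> finite (tsupp (zmul j f))"
  by (meson finite_imageI finite_subset tsupp_zmul)

lemma lin_ext_superset:
  assumes "finite S" "tsupp v \<subseteq> S"
  shows "lin_ext f v k = (\<Sum>x\<in>S. v x * f x k)"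
  unfolding lin_ext_def
  by (rule sum.mono_neutral_left) (use assms in \<open>auto simp: tsupp_def\<close>)

lemma lin_ext_tadd:
  assumes "finite (tsupp a)" "finite (tsupp b)"
  shows "lin_ext f (tadd a b) = tadd (lin_ext f a) (lin_ext f b)"
proof
  fix k
  let ?S = "tsupp a \<union> tsupp b"
  have "lin_ext f (tadd a b) k = (\<Sum>x\<in>?S. tadd a b x * f x k)"
    by (rule lin_ext_superset) (use assms tsupp_tadd in auto)
  also have "\<dots> = (\<Sum>x\<in>?S. a x * f x k) + (\<Sum>x\<in>?S. b x * f x k)"
    by (simp add: tadd_def algebra_simps sum.distrib)
  also have "\<dots> = lin_ext f a k + lin_ext f b k"
    using lin_ext_superset[of ?S a f k] lin_ext_superset[of ?S b f k] assms by auto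
  finally show "lin_ext f (tadd a b) k = tadd (lin_ext f a) (lin_ext f b) k"
    by (simp add: tadd_def)
qed

lemma lin_ext_smul:
  assumes "finite (tsupp a)"
  shows "lin_ext f (smul c a) = smul c (lin_ext f a)"
proof
  fix k
  have "lin_ext f (smul c a) k = (\<Sum>x\<in>tsupp a. smul c a x * f x k)"
    by (rule lin_ext_superset) (use assms tsupp_smul in auto)
  then show "lin_ext f (smul c a) k = smul c (lin_ext f a) k"
    by (simp add: lin_ext_def smul_def sum_distrib_left algebra_simps)
qed

lemma tsupp_tdelta [simp]: "tsupp (tdelta k) = {k}"
  by (auto simp: tsupp_def tdelta_def)
lemma lin_ext_tdelta [simp]: "lin_ext f (tdelta k) = f k"
  unfolding lin_ext_def tsupp_tdelta by (simp add: tdelta_def)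
lemma lin_ext_zero [simp]: "lin_ext f (\<lambda>_. 0) = (\<lambda>_. 0)"
  by (simp add: lin_ext_def tsupp_def fun_eq_iff)

definition valid_fidx :: "nat \<Rightarrow> nat \<Rightarrow> fidx \<Rightarrow> bool" where
  "valid_fidx N L t = (case t of (m, a, e) \<Rightarrow> 1 \<le> a \<and> a \<le> L \<and> 1 \<le> e \<and> e \<le> N)"

lemma valid_idx_iff: "valid_idx N L n k \<longleftrightarrow> length k = n \<and> (\<forall>j<n. valid_fidx N L (k ! j))"
  unfolding valid_idx_def valid_fidx_def ..

lemma valid_fidx_exp_inc [simp]: "valid_fidx N L (exp_inc x) = valid_fidx N L x"
  and valid_fidx_exp_dec [simp]: "valid_fidx N L (exp_dec x) = valid_fidx N L x"
  by (cases x; simp add: valid_fidx_def)+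

lemma is_tensor_iff: "is_tensor N L n v \<longleftrightarrow> finite (tsupp v) \<and> tsupp v \<subseteq> Collect (valid_idx N L n)"
  by (auto simp: is_tensor_def tsupp_def)

lemma is_tensor_supp_subset:
  "is_tensor N L n a \<Longrightarrow> is_tensor N L n b \<Longrightarrow> tsupp c \<subseteq> tsupp a \<union> tsupp b \<Longrightarrow> is_tensor N L n c"
  unfolding is_tensor_iff by (meson finite_UnI finite_subset le_sup_iff order_trans)

lemma is_tensor_zero: "is_tensor N L n (\<lambda>_. 0)"
  by (simp add: is_tensor_def tsupp_def)
lemma is_tensor_tadd: "is_tensor N L n a \<Longrightarrow> is_tensor N L n b \<Longrightarrow> is_tensor N L n (tadd a b)"
  using is_tensor_supp_subset tsupp_tadd by blast
lemma is_tensor_tsub: "is_tensor N L n a \<Longrightarrow> is_tensor N L n b \<Longrightarrow> is_tensor N L n (tsub a b)"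
  using is_tensor_supp_subset tsupp_tsub by blast
lemma is_tensor_smul: "is_tensor N L n a \<Longrightarrow> is_tensor N L n (smul c a)"
  using is_tensor_supp_subset[of N L n a a "smul c a"] tsupp_smul by blast

lemma is_tensor_zmul:
  assumes "is_tensor N L n f"
  shows "is_tensor N L n (zmul j f)"
  unfolding is_tensor_def
proof
  show "finite (tsupp (zmul j f))"
    using assms finite_tsupp_zmul by (auto simp: is_tensor_def)
  show "\<forall>k. zmul j f k \<noteq> 0 \<longrightarrow> valid_idx N L n k"
  proof (intro allI impI)
    fix k
    assume "zmul j f k \<noteq> 0"
    then have "j < length k" "valid_idx N L n (k[j := exp_dec (k ! j)])"
      using assms by (auto simp: zmul_alt is_tensor_def split: if_splits)
    then show "valid_idx N L n k"
      by (auto simp: valid_idx_iff nth_list_update split: if_splits)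
  qed
qed

lemma is_tensor_dprime: "is_tensor N L n f \<Longrightarrow> is_tensor N L n (dprime N i f)"
  unfolding dprime_def by (intro is_tensor_tsub is_tensor_smul is_tensor_zmul)

lemma is_tensor_length: "is_tensor N L n v \<Longrightarrow> v k \<noteq> 0 \<Longrightarrow> length k = n"
  by (auto simp: is_tensor_def valid_idx_def)

section \<open>The defining equation of \<open>cT\<close>\<close>

definition zdiff :: "nat \<Rightarrow> tensor \<Rightarrow> tensor" where
  "zdiff i v = tsub (zmul i v) (zmul (Suc i) v)"

definition cT_eqn_lhs :: "nat \<Rightarrow> nat \<Rightarrow> tensor \<Rightarrow> tensor" where
  "cT_eqn_lhs N i u = zdiff i (dprime N i u)"

definition cT_eqn_rhs :: "nat \<Rightarrow> nat \<Rightarrow> tensor \<Rightarrow> tensor" where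
  "cT_eqn_rhs N i v = (let X = tsub (dprime N i v) (sflip i (Rop N i v)) in
     tsub (zmul i X) (smul ((qpar N)^2) (zmul (Suc i) X)))"

definition cT_eqn :: "nat \<Rightarrow> nat \<Rightarrow> tensor \<Rightarrow> tensor \<Rightarrow> bool" where
  "cT_eqn N i w v \<longleftrightarrow> cT_eqn_lhs N i (tadd w v) = cT_eqn_rhs N i v"

lemma zdiff_tadd: "zdiff i (tadd a b) = tadd (zdiff i a) (zdiff i b)"
  by (simp add: zdiff_def zmul_tadd tsub_tadd_tadd)

lemma cT_conv_The: "cT N L n i v = (THE w. is_tensor N L n w \<and> cT_eqn N i w v)"
  unfolding cT_def cT_eqn_def cT_eqn_lhs_def cT_eqn_rhs_def zdiff_def ..

lemma dprime_zdiff: "dprime N i (zdiff i v) = zdiff i (dprime N i v)"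
proof -
  have "zmul (Suc i) (zmul i f) = zmul i (zmul (Suc i) f)" for f
    by (simp add: zmul_commute)
  then show ?thesis
    unfolding dprime_def zdiff_def zmul_tsub zmul_smul
    by (simp add: tsub_def smul_def fun_eq_iff algebra_simps)
qed

text \<open>The defining equation of \<open>cT\<close> is the equation below multiplied by the common factor
  \<open>q^2 z_(i+1) - z_i\<close>.\<close>
lemma cT_eqn_if_reduced:
  assumes "zdiff i (tadd w v) = tsub (sflip i (Rop N i v)) (dprime N i v)"
  shows "cT_eqn N i w v"
proof -
  let ?X = "tsub (dprime N i v) (sflip i (Rop N i v))"
  have "zdiff i (dprime N i (tadd w v)) = dprime N i (tsub (sflip i (Rop N i v)) (dprime N i v))"
    by (simp only: dprime_zdiff[symmetric] assms)
  also have "\<dots> = tsub (zmul i ?X) (smul ((qpar N)^2) (zmul (Suc i) ?X))"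
    unfolding dprime_def zmul_tsub zmul_smul by (simp add: tsub_def smul_def fun_eq_iff algebra_simps)
  finally show ?thesis
    unfolding cT_eqn_def cT_eqn_lhs_def cT_eqn_rhs_def Let_def .
qed

text \<open>Both \<open>z_i - z_(i+1)\<close> and \<open>q^2 z_(i+1) - z_i\<close> are injective on finitely supported tensors:
  a kernel element would be constant up to a factor along the infinite orbit of \<open>shift_pair i\<close>.\<close>
definition shift_pair :: "nat \<Rightarrow> idx \<Rightarrow> idx" where
  "shift_pair i k = k[i := exp_inc (k ! i), Suc i := exp_dec (k ! Suc i)]"

lemma length_shift_pair_pow [simp]: "length ((shift_pair i ^^ t) k) = length k"
  by (induction t) (auto simp: shift_pair_def)

lemma shift_pair_pow_nth:
  "Suc i < length k \<Longrightarrow> fst ((shift_pair i ^^ t) k ! i) = fst (k ! i) + int t"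
proof (induction t)
  case 0
  then show ?case by simp
next
  case (Suc t)
  obtain p a e where pae: "(shift_pair i ^^ t) k ! i = (p, a, e)"
    by (cases "(shift_pair i ^^ t) k ! i")
  have "fst (shift_pair i ((shift_pair i ^^ t) k) ! i) = p + 1"
    using Suc.prems pae by (simp add: shift_pair_def)
  then show ?case
    using Suc pae by simp
qed

lemma zero_if_shift_proportional:
  assumes g: "is_tensor N L n g" and i: "Suc i < n"
    and step: "\<And>k. length k = n \<Longrightarrow> g k = c * g (shift_pair i k)"
  shows "g = (\<lambda>_. 0)"
proof
  fix k
  show "g k = 0"
  proof (rule ccontr)
    assume nz: "g k \<noteq> 0"
    with g have lk: "length k = n"
      by (rule is_tensor_length)
    have "g k = c ^ t * g ((shift_pair i ^^ t) k)" for t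
      by (induction t) (use step lk in auto)
    then have "g ((shift_pair i ^^ t) k) \<noteq> 0" for t
      using nz by (metis mult_zero_right)
    then have "range (\<lambda>t. (shift_pair i ^^ t) k) \<subseteq> tsupp g"
      by (auto simp: tsupp_def)
    moreover have "inj (\<lambda>t. (shift_pair i ^^ t) k)"
    proof (rule injI)
      fix s t
      assume "(shift_pair i ^^ s) k = (shift_pair i ^^ t) k"
      then have "fst ((shift_pair i ^^ s) k ! i) = fst ((shift_pair i ^^ t) k ! i)"
        by simp
      then show "s = t"
        using shift_pair_pow_nth[of i k] i lk by simp
    qed
    ultimately show False
      using g finite_subset range_inj_infinite unfolding is_tensor_def by blast
  qed
qed

lemma zero_if_zdiff_zero:
  assumes "is_tensor N L n h" "Suc i < n" "zdiff i h = (\<lambda>_. 0)"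
  shows "h = (\<lambda>_. 0)"
proof (rule zero_if_shift_proportional[OF assms(1,2)])
  fix k :: idx
  assume "length k = n"
  moreover have "zdiff i h (k[i := exp_inc (k ! i)]) = 0"
    using assms(3) by simp
  ultimately show "h k = 1 * h (shift_pair i k)"
    using assms(2) by (simp add: zdiff_def tsub_def zmul_alt shift_pair_def)
qed

lemma zero_if_dprime_zero:
  assumes "is_tensor N L n g" "Suc i < n" "dprime N i g = (\<lambda>_. 0)"
  shows "g = (\<lambda>_. 0)"
proof (rule zero_if_shift_proportional[OF assms(1,2)])
  fix k :: idx
  assume "length k = n"
  moreover have "dprime N i g (k[i := exp_inc (k ! i)]) = 0"
    using assms(3) by simp
  ultimately show "g k = (qpar N)^2 * g (shift_pair i k)"
    using assms(2) by (simp add: dprime_def tsub_def smul_def zmul_alt shift_pair_def)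
qed

lemma cT_eqn_unique:
  assumes "is_tensor N L n w1" "is_tensor N L n w2" "cT_eqn N i w1 v" "cT_eqn N i w2 v" "Suc i < n"
  shows "w1 = w2"
proof -
  let ?g = "tsub w1 w2"
  have g: "is_tensor N L n ?g"
    using assms(1,2) by (rule is_tensor_tsub)
  have "tadd w1 v = tadd (tadd w2 v) ?g"
    by (simp add: tadd_def tsub_def fun_eq_iff)
  moreover have "zdiff i (dprime N i (tadd w1 v)) = zdiff i (dprime N i (tadd w2 v))"
    using assms(3,4) unfolding cT_eqn_def cT_eqn_lhs_def by simp
  ultimately have "tadd (zdiff i (dprime N i (tadd w2 v))) (zdiff i (dprime N i ?g))
      = zdiff i (dprime N i (tadd w2 v))"
    by (simp only: dprime_tadd zdiff_tadd)
  then have "zdiff i (dprime N i ?g) = (\<lambda>_. 0)"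
    by (simp add: tadd_def fun_eq_iff)
  then have "dprime N i ?g = (\<lambda>_. 0)"
    using zero_if_zdiff_zero[OF is_tensor_dprime[OF g] assms(5)] by blast
  then have "?g = (\<lambda>_. 0)"
    using zero_if_dprime_zero[OF g assms(5)] by blast
  then show ?thesis
    by (simp add: tsub_def fun_eq_iff)
qed

lemma cT_eqI:
  assumes "is_tensor N L n w" "cT_eqn N i w v" "Suc i < n"
  shows "cT N L n i v = w"
  unfolding cT_conv_The by (rule the_equality) (use assms cT_eqn_unique in blast)+

section \<open>\<open>cT\<close> and \<open>sT\<close> on basis vectors\<close>

definition psupp :: "ptensor \<Rightarrow> (fidx \<times> fidx) set" where
  "psupp \<phi> = {(x, y). \<phi> x y \<noteq> 0}"

definition valid_pairs :: "nat \<Rightarrow> nat \<Rightarrow> (fidx \<times> fidx) set" where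
  "valid_pairs N L = {(x, y). valid_fidx N L x \<and> valid_fidx N L y}"

definition is_ptensor :: "nat \<Rightarrow> nat \<Rightarrow> ptensor \<Rightarrow> bool" where
  "is_ptensor N L \<phi> \<longleftrightarrow> finite (psupp \<phi>) \<and> psupp \<phi> \<subseteq> valid_pairs N L"

lemma is_ptensor_union:
  "is_ptensor N L \<phi> \<Longrightarrow> is_ptensor N L \<psi> \<Longrightarrow> psupp \<chi> \<subseteq> psupp \<phi> \<union> psupp \<psi> \<Longrightarrow> is_ptensor N L \<chi>"
  unfolding is_ptensor_def by (meson finite_UnI finite_subset le_sup_iff order_trans)

lemma is_ptensor_image:
  assumes "is_ptensor N L \<phi>" "psupp \<psi> \<subseteq> f ` psupp \<phi>" "f ` valid_pairs N L \<subseteq> valid_pairs N L"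
  shows "is_ptensor N L \<psi>"
  using assms unfolding is_ptensor_def by (meson finite_imageI finite_subset image_mono order_trans)

lemma is_ptensor_padd: "is_ptensor N L \<phi> \<Longrightarrow> is_ptensor N L \<psi> \<Longrightarrow> is_ptensor N L (padd \<phi> \<psi>)"
  by (erule is_ptensor_union) (auto simp: psupp_def padd_def)
lemma is_ptensor_psub: "is_ptensor N L \<phi> \<Longrightarrow> is_ptensor N L \<psi> \<Longrightarrow> is_ptensor N L (psub \<phi> \<psi>)"
  by (erule is_ptensor_union) (auto simp: psupp_def psub_def)
lemma is_ptensor_psmul: "is_ptensor N L \<phi> \<Longrightarrow> is_ptensor N L (psmul c \<phi>)"
  by (rule is_ptensor_image[where f = id]) (auto simp: psupp_def psmul_def)

lemma is_ptensor_pz1: "is_ptensor N L \<phi> \<Longrightarrow> is_ptensor N L (pz1 \<phi>)"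
proof (rule is_ptensor_image[where f = "\<lambda>(x, y). (exp_inc x, y)"])
  show "psupp (pz1 \<phi>) \<subseteq> (\<lambda>(x, y). (exp_inc x, y)) ` psupp \<phi>"
    by (auto simp: psupp_def pz1_def intro!: image_eqI[where x = "(exp_dec _, _)"])
qed (auto simp: valid_pairs_def valid_fidx_def)

lemma is_ptensor_pz2: "is_ptensor N L \<phi> \<Longrightarrow> is_ptensor N L (pz2 \<phi>)"
proof (rule is_ptensor_image[where f = "\<lambda>(x, y). (x, exp_inc y)"])
  show "psupp (pz2 \<phi>) \<subseteq> (\<lambda>(x, y). (x, exp_inc y)) ` psupp \<phi>"
    by (auto simp: psupp_def pz2_def intro!: image_eqI[where x = "(_, exp_dec _)"])
qed (auto simp: valid_pairs_def valid_fidx_def)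

lemma is_ptensor_pdelta: "valid_fidx N L x \<Longrightarrow> valid_fidx N L y \<Longrightarrow> is_ptensor N L (pdelta x y)"
  by (auto simp: is_ptensor_def psupp_def pdelta_def valid_pairs_def split: if_splits
      intro: finite_subset[where B = "{(x, y)}"])

lemma is_ptensor_divdiff:
  assumes "valid_fidx N L (p1, r1)" "valid_fidx N L (p2, r2)"
  shows "is_ptensor N L (divdiff (p1, r1) (p2, r2))"
  unfolding is_ptensor_def
proof
  let ?f = "\<lambda>j. ((j, r1), (p1 + p2 - 1 - j, r2))"
  have "psupp (divdiff (p1, r1) (p2, r2)) \<subseteq> ?f ` {min p1 p2..max p1 p2}"
    by (auto simp: psupp_def divdiff_def divdiff_coeff_def image_iff split: if_splits)
  then show "finite (psupp (divdiff (p1, r1) (p2, r2)))"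
    by (rule finite_subset) simp
  show "psupp (divdiff (p1, r1) (p2, r2)) \<subseteq> valid_pairs N L"
    using assms by (auto simp: psupp_def divdiff_def valid_pairs_def valid_fidx_def split: if_splits)
qed

lemma is_ptensor_cT_pair:
  assumes "valid_fidx N L x" "valid_fidx N L y"
  shows "is_ptensor N L (cT_pair N x y)"
proof -
  obtain p1 a1 e1 p2 a2 e2 where x: "x = (p1, a1, e1)" and y: "y = (p2, a2, e2)"
    by (cases x; cases y) auto
  have v: "valid_fidx N L (p2, a2, e1)" "valid_fidx N L (p1, a1, e2)" "valid_fidx N L (p2 + 1, a2, e2)"
    using assms unfolding x y by (auto simp: valid_fidx_def)
  note parts = is_ptensor_divdiff[OF assms[unfolded x y]] is_ptensor_pdelta[OF assms]
    is_ptensor_pdelta[OF v(1,2)] is_ptensor_divdiff[OF assms(1)[unfolded x] v(3)]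
  show ?thesis
    unfolding cT_pair_def x y Let_def prod.case using parts unfolding x y
    by (auto intro!: is_ptensor_psub is_ptensor_psmul is_ptensor_pz1 is_ptensor_pz2)
qed

lemma is_ptensor_sT_pair:
  assumes "valid_fidx N L x" "valid_fidx N L y"
  shows "is_ptensor N L (sT_pair N x y)"
proof -
  obtain p1 a1 e1 p2 a2 e2 where x: "x = (p1, a1, e1)" and y: "y = (p2, a2, e2)"
    by (cases x; cases y) auto
  have v: "valid_fidx N L (p1, a1, e2)" "valid_fidx N L (p2, a2, e1)"
    using assms unfolding x y by (auto simp: valid_fidx_def)
  note parts = is_ptensor_pdelta[OF assms] is_ptensor_pdelta[OF v]
  show ?thesis
    unfolding sT_pair_def x y Let_def prod.case using parts unfolding x y
    by (auto intro!: is_ptensor_padd is_ptensor_psmul)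
qed

lemma valid_idx_set_pair:
  assumes "valid_idx N L n k" "Suc i < n" "valid_fidx N L x" "valid_fidx N L y"
  shows "valid_idx N L n (set_pair i k x y)"
  using assms unfolding valid_idx_iff by (auto simp: set_pair_def nth_list_update)

lemma is_tensor_embed_pair:
  assumes k: "valid_idx N L n k" and i: "Suc i < n" and \<phi>: "is_ptensor N L \<phi>"
  shows "is_tensor N L n (embed_pair i k \<phi>)"
proof -
  have lk: "Suc i < length k"
    using k i by (simp add: valid_idx_def)
  have "tsupp (embed_pair i k \<phi>) \<subseteq> (\<lambda>(x, y). set_pair i k x y) ` psupp \<phi>"
  proof
    fix k'
    assume "k' \<in> tsupp (embed_pair i k \<phi>)"
    then show "k' \<in> (\<lambda>(x, y). set_pair i k x y) ` psupp \<phi>"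
      by (cases rule: embed_pair_cases[OF lk, of k' \<phi>]) (auto simp: tsupp_def psupp_def)
  qed
  moreover have "(\<lambda>(x, y). set_pair i k x y) ` psupp \<phi> \<subseteq> Collect (valid_idx N L n)"
    using \<phi> valid_idx_set_pair[OF k i] by (auto simp: is_ptensor_def valid_pairs_def)
  ultimately show ?thesis
    using \<phi> unfolding is_tensor_iff is_ptensor_def by (meson finite_imageI finite_subset order_trans)
qed

lemma dprime_embed_pair:
  "Suc i < length k \<Longrightarrow> dprime N i (embed_pair i k \<phi>) = embed_pair i k (dprime_pair N \<phi>)"
  by (simp add: dprime_def dprime_pair_def zmul1_embed zmul2_embed smul_embed tsub_embed)

lemma zdiff_embed_pair:
  "Suc i < length k \<Longrightarrow> zdiff i (embed_pair i k \<phi>) = embed_pair i k (psub (pz1 \<phi>) (pz2 \<phi>))"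
  by (simp add: zdiff_def zmul1_embed zmul2_embed tsub_embed)

lemma cT_eqn_tdelta:
  assumes lk: "Suc i < length k"
  shows "cT_eqn N i (embed_pair i k (cT_pair N (k ! i) (k ! Suc i))) (tdelta k)"
proof (rule cT_eqn_if_reduced)
  let ?x = "k ! i" and ?y = "k ! Suc i"
  have "zdiff i (tadd (embed_pair i k (cT_pair N ?x ?y)) (tdelta k))
      = embed_pair i k (psub (pz1 (padd (cT_pair N ?x ?y) (pdelta ?x ?y)))
                             (pz2 (padd (cT_pair N ?x ?y) (pdelta ?x ?y))))"
    unfolding tdelta_eq_embed[OF lk] tadd_embed zdiff_embed_pair[OF lk] ..
  also have "\<dots> = embed_pair i k (psub (pflip (R_pair N ?x ?y)) (dprime_pair N (pdelta ?x ?y)))"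
    unfolding cT_pair_equation ..
  also have "\<dots> = tsub (sflip i (R_basis N i k)) (dprime N i (embed_pair i k (pdelta ?x ?y)))"
    unfolding R_basis_eq_embed[OF lk] sflip_embed[OF lk] dprime_embed_pair[OF lk] tsub_embed ..
  finally show "zdiff i (tadd (embed_pair i k (cT_pair N ?x ?y)) (tdelta k))
      = tsub (sflip i (Rop N i (tdelta k))) (dprime N i (tdelta k))"
    unfolding Rop_def lin_ext_tdelta tdelta_eq_embed[OF lk, symmetric] .
qed

lemma cT_tdelta:
  assumes k: "valid_idx N L n k" and i: "Suc i < n"
  shows "cT N L n i (tdelta k) = embed_pair i k (cT_pair N (k ! i) (k ! Suc i))"
proof (rule cT_eqI[OF _ _ i])
  have lk: "Suc i < length k"
    using k i by (simp add: valid_idx_def)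
  have "valid_fidx N L (k ! i)" "valid_fidx N L (k ! Suc i)"
    using k i by (auto simp: valid_idx_iff)
  then show "is_tensor N L n (embed_pair i k (cT_pair N (k ! i) (k ! Suc i)))"
    by (intro is_tensor_embed_pair[OF k i] is_ptensor_cT_pair)
  show "cT_eqn N i (embed_pair i k (cT_pair N (k ! i) (k ! Suc i))) (tdelta k)"
    by (rule cT_eqn_tdelta[OF lk])
qed

lemma sT_tdelta: "Suc i < length k \<Longrightarrow> sT N i (tdelta k) = embed_pair i k (sT_pair N (k ! i) (k ! Suc i))"
  unfolding sT_def lin_ext_tdelta by (rule sT_basis_eq_embed)

section \<open>The space of relations\<close>

lemma Rop_tadd: "finite (tsupp a) \<Longrightarrow> finite (tsupp b) \<Longrightarrow> Rop N i (tadd a b) = tadd (Rop N i a) (Rop N i b)"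
  unfolding Rop_def by (rule lin_ext_tadd)
lemma Rop_smul: "finite (tsupp a) \<Longrightarrow> Rop N i (smul c a) = smul c (Rop N i a)"
  unfolding Rop_def by (rule lin_ext_smul)
lemma sT_tadd: "finite (tsupp a) \<Longrightarrow> finite (tsupp b) \<Longrightarrow> sT N i (tadd a b) = tadd (sT N i a) (sT N i b)"
  unfolding sT_def by (rule lin_ext_tadd)
lemma sT_smul: "finite (tsupp a) \<Longrightarrow> sT N i (smul c a) = smul c (sT N i a)"
  unfolding sT_def by (rule lin_ext_smul)
lemma sT_zero: "sT N i (\<lambda>_. 0) = (\<lambda>_. 0)"
  unfolding sT_def by simp

lemma cT_eqn_lhs_tadd: "cT_eqn_lhs N i (tadd a b) = tadd (cT_eqn_lhs N i a) (cT_eqn_lhs N i b)"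
  unfolding cT_eqn_lhs_def dprime_tadd zdiff_tadd ..
lemma cT_eqn_lhs_smul: "cT_eqn_lhs N i (smul c a) = smul c (cT_eqn_lhs N i a)"
  unfolding cT_eqn_lhs_def zdiff_def dprime_smul zmul_smul tsub_smul ..
lemma cT_eqn_rhs_tadd:
  "finite (tsupp a) \<Longrightarrow> finite (tsupp b) \<Longrightarrow> cT_eqn_rhs N i (tadd a b) = tadd (cT_eqn_rhs N i a) (cT_eqn_rhs N i b)"
  unfolding cT_eqn_rhs_def Let_def Rop_tadd dprime_tadd sflip_tadd tsub_tadd_tadd zmul_tadd smul_tadd
  by simp
lemma cT_eqn_rhs_smul: "finite (tsupp a) \<Longrightarrow> cT_eqn_rhs N i (smul c a) = smul c (cT_eqn_rhs N i a)"
  unfolding cT_eqn_rhs_def Let_def Rop_smul dprime_smul sflip_smul tsub_smul zmul_smul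
  by (simp add: smul_commute tsub_smul)

lemma cT_eqn_zero: "cT_eqn N i (\<lambda>_. 0) (\<lambda>_. 0)"
  unfolding cT_eqn_def cT_eqn_lhs_def cT_eqn_rhs_def Let_def Rop_def lin_ext_zero
  by (simp add: zdiff_def tadd_def tsub_def smul_def dprime_def zmul_alt sflip_alt)

lemma cT_eqn_tadd:
  assumes "cT_eqn N i w1 v1" "cT_eqn N i w2 v2" "finite (tsupp v1)" "finite (tsupp v2)"
  shows "cT_eqn N i (tadd w1 w2) (tadd v1 v2)"
proof -
  have "tadd (tadd w1 w2) (tadd v1 v2) = tadd (tadd w1 v1) (tadd w2 v2)"
    by (simp add: tadd_def fun_eq_iff algebra_simps)
  with assms show ?thesis
    unfolding cT_eqn_def by (simp add: cT_eqn_lhs_tadd cT_eqn_rhs_tadd)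
qed

lemma cT_eqn_smul:
  assumes "cT_eqn N i w v" "finite (tsupp v)"
  shows "cT_eqn N i (smul c w) (smul c v)"
proof -
  have "tadd (smul c w) (smul c v) = smul c (tadd w v)"
    by (simp add: tadd_def smul_def fun_eq_iff algebra_simps)
  with assms show ?thesis
    unfolding cT_eqn_def by (simp add: cT_eqn_lhs_smul cT_eqn_rhs_smul)
qed

text \<open>\<open>cT\<close> is given by a definite description, so it is linear only on the tensors for which
  its defining equation has a solution; all basis vectors are such.\<close>
definition cT_solvable :: "nat \<Rightarrow> nat \<Rightarrow> nat \<Rightarrow> nat \<Rightarrow> tensor \<Rightarrow> bool" where
  "cT_solvable N L n i v \<longleftrightarrow> is_tensor N L n v \<and> (\<exists>w. is_tensor N L n w \<and> cT_eqn N i w v)"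

lemma cT_solvableD:
  assumes "cT_solvable N L n i v" "Suc i < n"
  shows "is_tensor N L n (cT N L n i v)" "cT_eqn N i (cT N L n i v) v"
  using assms cT_eqI unfolding cT_solvable_def by metis+

lemma cT_solvable_finite: "cT_solvable N L n i v \<Longrightarrow> finite (tsupp v)"
  by (simp add: cT_solvable_def is_tensor_def)

lemma cT_solvable_zero: "cT_solvable N L n i (\<lambda>_. 0)"
  unfolding cT_solvable_def using cT_eqn_zero is_tensor_zero by blast

lemma cT_solvable_tadd:
  "cT_solvable N L n i a \<Longrightarrow> cT_solvable N L n i b \<Longrightarrow> cT_solvable N L n i (tadd a b)"
  unfolding cT_solvable_def
  by (metis cT_eqn_tadd is_tensor_def is_tensor_tadd)

lemma cT_solvable_smul: "cT_solvable N L n i a \<Longrightarrow> cT_solvable N L n i (smul c a)"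
  unfolding cT_solvable_def
  by (metis cT_eqn_smul is_tensor_def is_tensor_smul)

lemma cT_solvable_tdelta:
  assumes k: "valid_idx N L n k" and i: "Suc i < n"
  shows "cT_solvable N L n i (tdelta k)"
proof -
  have lk: "Suc i < length k"
    using k i by (simp add: valid_idx_def)
  have v: "valid_fidx N L (k ! i)" "valid_fidx N L (k ! Suc i)"
    using k i by (auto simp: valid_idx_iff)
  have "is_tensor N L n (tdelta k)"
    unfolding tdelta_eq_embed[OF lk] by (rule is_tensor_embed_pair[OF k i is_ptensor_pdelta[OF v]])
  moreover have "is_tensor N L n (embed_pair i k (cT_pair N (k ! i) (k ! Suc i)))"
    by (rule is_tensor_embed_pair[OF k i is_ptensor_cT_pair[OF v]])
  ultimately show ?thesis
    using cT_eqn_tdelta[OF lk] unfolding cT_solvable_def by (intro conjI exI)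
qed

lemma cT_tadd:
  assumes "cT_solvable N L n i a" "cT_solvable N L n i b" "Suc i < n"
  shows "cT N L n i (tadd a b) = tadd (cT N L n i a) (cT N L n i b)"
  using assms cT_solvableD[OF assms(1,3)] cT_solvableD[OF assms(2,3)]
  by (intro cT_eqI is_tensor_tadd cT_eqn_tadd cT_solvable_finite)

lemma cT_smul:
  assumes "cT_solvable N L n i a" "Suc i < n"
  shows "cT N L n i (smul c a) = smul c (cT N L n i a)"
  using assms cT_solvableD[OF assms]
  by (intro cT_eqI is_tensor_smul cT_eqn_smul cT_solvable_finite)

lemma cT_zero: "Suc i < n \<Longrightarrow> cT N L n i (\<lambda>_. 0) = (\<lambda>_. 0)"
  by (rule cT_eqI[OF is_tensor_zero cT_eqn_zero])

text \<open>Part of the span \<open>\<Sum>_i Im(cT_i - sT_i)\<close> of \<open>wedge_zero\<close>: restricting to solvable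
  arguments makes it closed under linear combinations.\<close>
definition relations :: "nat \<Rightarrow> nat \<Rightarrow> nat \<Rightarrow> tensor set" where
  "relations N L n = {v. \<exists>x. (\<forall>j. cT_solvable N L n j (x j)) \<and>
      v = (\<lambda>k. \<Sum>j<n - 1. cT N L n j (x j) k - sT N j (x j) k)}"

lemma relationsI:
  "(\<And>j. cT_solvable N L n j (x j)) \<Longrightarrow> v = (\<lambda>k. \<Sum>j<n - 1. cT N L n j (x j) k - sT N j (x j) k)
    \<Longrightarrow> v \<in> relations N L n"
  unfolding relations_def by blast

lemma relations_zero: "(\<lambda>_. 0) \<in> relations N L n"
  by (rule relationsI[of N L n "\<lambda>_ _. 0"]) (simp_all add: cT_solvable_zero cT_zero sT_zero)

lemma relations_tadd:
  assumes "a \<in> relations N L n" "b \<in> relations N L n"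
  shows "tadd a b \<in> relations N L n"
proof -
  obtain x where x: "\<And>j. cT_solvable N L n j (x j)"
    "a = (\<lambda>k. \<Sum>j<n - 1. cT N L n j (x j) k - sT N j (x j) k)"
    using assms(1) unfolding relations_def by blast
  obtain y where y: "\<And>j. cT_solvable N L n j (y j)"
    "b = (\<lambda>k. \<Sum>j<n - 1. cT N L n j (y j) k - sT N j (y j) k)"
    using assms(2) unfolding relations_def by blast
  have "cT N L n j (tadd (x j) (y j)) k - sT N j (tadd (x j) (y j)) k
      = (cT N L n j (x j) k - sT N j (x j) k) + (cT N L n j (y j) k - sT N j (y j) k)"
    if "j < n - 1" for j k
  proof -
    have j: "Suc j < n"
      using that by simp
    show ?thesis
      unfolding cT_tadd[OF x(1) y(1) j] sT_tadd[OF cT_solvable_finite[OF x(1)] cT_solvable_finite[OF y(1)]]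
      by (simp add: tadd_def)
  qed
  then have "tadd a b = (\<lambda>k. \<Sum>j<n - 1. cT N L n j (tadd (x j) (y j)) k - sT N j (tadd (x j) (y j)) k)"
    unfolding x(2) y(2) tadd_def by (simp add: sum.distrib)
  moreover have "cT_solvable N L n j (tadd (x j) (y j))" for j
    using x(1) y(1) by (rule cT_solvable_tadd)
  ultimately show ?thesis
    by (intro relationsI)
qed

lemma relations_smul:
  assumes "a \<in> relations N L n"
  shows "smul c a \<in> relations N L n"
proof -
  obtain x where x: "\<And>j. cT_solvable N L n j (x j)"
    "a = (\<lambda>k. \<Sum>j<n - 1. cT N L n j (x j) k - sT N j (x j) k)"
    using assms unfolding relations_def by blast
  have "cT N L n j (smul c (x j)) k - sT N j (smul c (x j)) k
      = c * (cT N L n j (x j) k - sT N j (x j) k)"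
    if "j < n - 1" for j k
  proof -
    have j: "Suc j < n"
      using that by simp
    show ?thesis
      unfolding cT_smul[OF x(1) j] sT_smul[OF cT_solvable_finite[OF x(1)]]
      by (simp add: smul_def algebra_simps)
  qed
  then have "smul c a = (\<lambda>k. \<Sum>j<n - 1. cT N L n j (smul c (x j)) k - sT N j (smul c (x j)) k)"
    unfolding x(2) smul_def by (simp add: sum_distrib_left)
  moreover have "cT_solvable N L n j (smul c (x j))" for j
    using x(1) by (rule cT_solvable_smul)
  ultimately show ?thesis
    by (intro relationsI)
qed

lemma relations_tsub: "a \<in> relations N L n \<Longrightarrow> b \<in> relations N L n \<Longrightarrow> tsub a b \<in> relations N L n"
  using relations_tadd[of a N L n "smul (-1) b"] relations_smul[of b N L n "-1"]
  by (simp add: tadd_def smul_def tsub_def)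

lemma relations_sum:
  "finite A \<Longrightarrow> (\<And>a. a \<in> A \<Longrightarrow> f a \<in> relations N L n) \<Longrightarrow> (\<lambda>k. \<Sum>a\<in>A. f a k) \<in> relations N L n"
proof (induction A rule: finite_induct)
  case empty
  then show ?case using relations_zero by simp
next
  case (insert a A)
  then show ?case
    using relations_tadd[of "f a" N L n "\<lambda>k. \<Sum>a\<in>A. f a k"] by (simp add: tadd_def)
qed

lemma relations_generator:
  assumes "valid_idx N L n k" "Suc i < n"
  shows "tsub (cT N L n i (tdelta k)) (sT N i (tdelta k)) \<in> relations N L n"
proof -
  define x where "x j = (if j = i then tdelta k else (\<lambda>_. 0))" for j
  have "(\<lambda>k'. \<Sum>j<n - 1. cT N L n j (x j) k' - sT N j (x j) k')
      = (\<lambda>k'. \<Sum>j<n - 1. if j = i then cT N L n i (tdelta k) k' - sT N i (tdelta k) k' else 0)"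
    by (intro ext sum.cong) (auto simp: x_def cT_zero sT_zero)
  also have "\<dots> = tsub (cT N L n i (tdelta k)) (sT N i (tdelta k))"
  proof -
    have "i < n - 1"
      using assms(2) by simp
    then show ?thesis
      by (simp add: tsub_def)
  qed
  finally show ?thesis
    using cT_solvable_tdelta[OF assms] cT_solvable_zero
    by (intro relationsI[where x = x]) (simp_all add: x_def)
qed

lemma wedge_zero_if_relations:
  "tdelta (map (u_idx N L) ks) \<in> relations N L (length ks) \<Longrightarrow> wedge_zero N L ks"
  unfolding wedge_zero_def relations_def Let_def cT_solvable_def by blast

section \<open>The ordering of the basis vectors \<open>u\<^sub>k\<close>\<close>

definition label :: "nat \<Rightarrow> nat \<Rightarrow> fidx \<Rightarrow> int" where
  "label N L t = (case t of (p, a, e) \<Rightarrow> int e - int N * (int a + int L * p))"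

lemma mixed_radix_less_iff:
  fixes B d d' c c' :: int
  assumes "0 < B" "1 \<le> d" "d \<le> B" "1 \<le> d'" "d' \<le> B"
  shows "d + B * c < d' + B * c' \<longleftrightarrow> c < c' \<or> (c = c' \<and> d < d')"
proof -
  have "B * c + B \<le> B * c'" if "c < c'"
    using mult_left_mono[of "c + 1" c' B] that assms(1) by (simp add: algebra_simps)
  moreover have "B * c' + B \<le> B * c" if "c' < c"
    using mult_left_mono[of "c' + 1" c B] that assms(1) by (simp add: algebra_simps)
  ultimately show ?thesis
    using assms by (cases c c' rule: linorder_cases) auto
qed

lemma label_less_iff:
  assumes "1 \<le> N" "1 \<le> L" "valid_fidx N L (p, a, e)" "valid_fidx N L (p', a', e')"
  shows "label N L (p, a, e) < label N L (p', a', e')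
    \<longleftrightarrow> p' < p \<or> (p' = p \<and> a' < a) \<or> (p' = p \<and> a' = a \<and> e < e')"
proof -
  have v: "1 \<le> int a" "int a \<le> int L" "1 \<le> int e" "int e \<le> int N"
    "1 \<le> int a'" "int a' \<le> int L" "1 \<le> int e'" "int e' \<le> int N"
    using assms(3,4) by (auto simp: valid_fidx_def)
  let ?c = "int a + int L * p" and ?c' = "int a' + int L * p'"
  have pos: "?c' < ?c \<longleftrightarrow> p' < p \<or> (p' = p \<and> a' < a)"
    using mixed_radix_less_iff[of "int L" "int a'" "int a" p' p] assms(2) v by auto
  have "?c < ?c' \<longleftrightarrow> p < p' \<or> (p = p' \<and> a < a')"
    using mixed_radix_less_iff[of "int L" "int a" "int a'" p p'] assms(2) v by auto
  with pos have eq: "?c' = ?c \<longleftrightarrow> p' = p \<and> a' = a"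
    by (metis linorder_neqE order_less_irrefl)
  have "label N L (p, a, e) < label N L (p', a', e') \<longleftrightarrow> int e + int N * (- ?c) < int e' + int N * (- ?c')"
    by (simp add: label_def algebra_simps)
  also have "\<dots> \<longleftrightarrow> ?c' < ?c \<or> (?c' = ?c \<and> e < e')"
    using mixed_radix_less_iff[of "int N" "int e" "int e'" "- ?c" "- ?c'"] assms(1) v by auto
  finally show ?thesis
    unfolding pos eq by auto
qed

lemma label_inj:
  assumes "1 \<le> N" "1 \<le> L" "valid_fidx N L t" "valid_fidx N L t'" "label N L t = label N L t'"
  shows "t = t'"
proof -
  obtain p a e p' a' e' where t: "t = (p, a, e)" and t': "t' = (p', a', e')"
    by (cases t; cases t') auto
  have "\<not> label N L t < label N L t'" "\<not> label N L t' < label N L t"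
    using assms(5) by auto
  then have "\<not> (p' < p \<or> (p' = p \<and> a' < a) \<or> (p' = p \<and> a' = a \<and> e < e'))"
    "\<not> (p < p' \<or> (p = p' \<and> a < a') \<or> (p = p' \<and> a = a' \<and> e' < e))"
    using label_less_iff[OF assms(1,2), of p a e p' a' e'] label_less_iff[OF assms(1,2), of p' a' e' p a e]
      assms(3,4) unfolding t t' by blast+
  then show ?thesis
    unfolding t t' by (metis linorder_neqE)
qed

lemma label_surj:
  assumes "1 \<le> N" "1 \<le> L"
  shows "\<exists>t. valid_fidx N L t \<and> label N L t = k"
proof -
  define c where "c = - ((k - 1) div int N)"
  define e where "e = (k - 1) mod int N + 1"
  define p where "p = (c - 1) div int L"
  define a where "a = (c - 1) mod int L + 1"
  have N: "int N > 0" and L: "int L > 0"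
    using assms by simp_all
  have e: "1 \<le> e" "e \<le> int N" and ke: "k = e - int N * c"
    unfolding e_def c_def using pos_mod_bound[OF N, of "k - 1"] pos_mod_sign[OF N, of "k - 1"]
      div_mult_mod_eq[of "k - 1" "int N"] by (simp_all add: algebra_simps)
  have a: "1 \<le> a" "a \<le> int L" and ca: "c = a + int L * p"
    unfolding a_def p_def using pos_mod_bound[OF L, of "c - 1"] pos_mod_sign[OF L, of "c - 1"]
      div_mult_mod_eq[of "c - 1" "int L"] by (simp_all add: algebra_simps)
  have "1 \<le> nat a" "nat a \<le> L" "1 \<le> nat e" "nat e \<le> N"
    using a e by linarith+
  then have "valid_fidx N L (p, nat a, nat e)"
    by (simp add: valid_fidx_def)
  moreover have "label N L (p, nat a, nat e) = k"
    using a e ke ca by (simp add: label_def)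
  ultimately show ?thesis
    by blast
qed

lemma u_idx_eq: "u_idx N L k = (THE t. valid_fidx N L t \<and> label N L t = k)"
  unfolding u_idx_def valid_fidx_def label_def
  by (rule arg_cong[where f = The]) (auto split: prod.splits)

lemma valid_u_idx:
  assumes "1 \<le> N" "1 \<le> L"
  shows "valid_fidx N L (u_idx N L k)" "label N L (u_idx N L k) = k"
proof -
  have "\<exists>!t. valid_fidx N L t \<and> label N L t = k"
    using label_surj[OF assms] label_inj[OF assms] by metis
  then show "valid_fidx N L (u_idx N L k)" "label N L (u_idx N L k) = k"
    unfolding u_idx_eq by (metis (mono_tags, lifting) theI')+
qed

lemma u_idx_label: "1 \<le> N \<Longrightarrow> 1 \<le> L \<Longrightarrow> valid_fidx N L t \<Longrightarrow> u_idx N L (label N L t) = t"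
  using valid_u_idx label_inj by metis

lemma valid_idx_map_u_idx: "1 \<le> N \<Longrightarrow> 1 \<le> L \<Longrightarrow> valid_idx N L (length ks) (map (u_idx N L) ks)"
  unfolding valid_idx_iff using valid_u_idx by simp

section \<open>Straightening a pair of adjacent factors\<close>

lemma Fract_power: "Fract (a :: 'a :: idom) 1 ^ n = Fract (a ^ n) 1"
  by (induction n) (simp_all add: One_fract_def)

lemma qpar_eq: "qpar N = Fract ([:0, 1:] ^ (2 * N)) 1"
  unfolding qpar_def qroot_def Fract_power ..

lemma qpar_nonzero: "qpar N \<noteq> 0"
proof
  assume "qpar N = 0"
  then have "([:0, 1:] ^ (2 * N) :: rat poly) = 0"
    by (simp add: qpar_eq Zero_fract_def eq_fract)
  then have "poly ([:0, 1:] ^ (2 * N) :: rat poly) 1 = 0"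
    by simp
  then show False
    by (simp add: poly_power)
qed

lemma one_plus_qpar_sq_nonzero: "1 + (qpar N)^2 \<noteq> 0"
proof
  assume "1 + (qpar N)^2 = 0"
  then have "(1 + [:0, 1:] ^ (4 * N) :: rat poly) = 0"
    by (simp add: qpar_eq Fract_power One_fract_def Zero_fract_def eq_fract power_mult[symmetric]
        mult.commute)
  then have "poly (1 + [:0, 1:] ^ (4 * N) :: rat poly) 0 = 0"
    by simp
  then show False
    by (simp add: poly_power power_0_left split: if_splits)
qed

lemma sT_pair_apply:
  "sT_pair N (p1, a1, e1) (p2, a2, e2) x y =
    (if e1 = e2 then (qpar N)^2 * pdelta (p1, a1, e1) (p2, a2, e2) x y
     else if e1 < e2 then qpar N * pdelta (p1, a1, e2) (p2, a2, e1) x y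
     else qpar N * pdelta (p1, a1, e2) (p2, a2, e1) x y
       + ((qpar N)^2 - 1) * pdelta (p1, a1, e1) (p2, a2, e2) x y)"
  by (simp add: sT_pair_def Let_def psmul_def padd_def)

lemma sT_pair_nonzero:
  "sT_pair N (p1, a1, e1) (p2, a2, e2) x y \<noteq> 0 \<Longrightarrow>
    (x, y) = ((p1, a1, e1), (p2, a2, e2)) \<or> (x, y) = ((p1, a1, e2), (p2, a2, e1))"
  by (auto simp: sT_pair_apply pdelta_def split: if_splits)

lemma cT_pair_same_position: "cT_pair N (p, a, e1) (p, a, e2) x y = - pdelta (p, a, e1) (p, a, e2) x y"
  by (simp add: cT_pair_def Let_def psub_def psmul_def pz1_def pz2_def divdiff_def divdiff_coeff_def)

lemma cT_pair_diag:
  assumes "p1 < p2 \<or> (p1 = p2 \<and> a1 < a2)"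
  shows "cT_pair N (p1, a1, e1) (p2, a2, e2) (p1, a1, e1) (p2, a2, e2) = (qpar N)^2 - 1"
  using assms
  by (cases a1 a2 rule: linorder_cases)
    (auto simp: cT_pair_def Let_def psub_def psmul_def pz1_def pz2_def divdiff_def divdiff_coeff_def
      pdelta_def)

lemma cT_pair_exchanged:
  assumes "p1 < p2 \<or> (p1 = p2 \<and> a1 < a2)"
  shows "cT_pair N (p1, a1, e1) (p2, a2, e2) (p2, a2, e1) (p1, a1, e2) = (if a1 = a2 then -1 else - qpar N)"
  using assms
  by (cases a1 a2 rule: linorder_cases)
    (auto simp: cT_pair_def Let_def psub_def psmul_def pz1_def pz2_def divdiff_def divdiff_coeff_def
      pdelta_def)

text \<open>Apart from the two points above, \<open>cT_pair\<close> is supported on the divided differences, whose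
  exponents lie strictly between those of the two factors.\<close>
lemma cT_pair_nonzero_between:
  assumes lex: "p1 < p2 \<or> (p1 = p2 \<and> a1 < a2)"
    and nz: "cT_pair N (p1, a1, e1) (p2, a2, e2) x y \<noteq> 0"
    and n1: "(x, y) \<noteq> ((p1, a1, e1), (p2, a2, e2))" and n2: "(x, y) \<noteq> ((p2, a2, e1), (p1, a1, e2))"
  shows "\<exists>px py. x = (px, a1, e1) \<and> y = (py, a2, e2) \<and> p1 < px \<and> (px < p2 \<or> (px = p2 \<and> a1 < a2))
    \<and> (p1 < py \<or> (p1 = py \<and> a1 < a2)) \<and> py < p2"
proof -
  obtain px xa xe py ya ye where x: "x = (px, xa, xe)" and y: "y = (py, ya, ye)"
    by (cases x; cases y) auto
  consider "a1 = a2" | "a2 < a1" | "a1 < a2"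
    by linarith
  then show ?thesis
  proof cases
    case 1
    then have "xa = a1 \<and> xe = e1 \<and> ya = a2 \<and> ye = e2 \<and>
      ((px - 1 + py = p1 + p2 - 1 \<and> divdiff_coeff p1 p2 (px - 1) \<noteq> 0)
       \<or> (px + (py - 1) = p1 + p2 - 1 \<and> divdiff_coeff p1 p2 px \<noteq> 0))"
      using nz n1 unfolding x y
      by (auto simp: cT_pair_def Let_def psub_def psmul_def pz1_def pz2_def divdiff_def pdelta_def
          split: if_splits)
    then show ?thesis
      using lex 1 n1 n2 unfolding x y by (auto simp: divdiff_coeff_def split: if_splits)
  next
    case 2
    then have "xa = a1 \<and> xe = e1 \<and> ya = a2 \<and> ye = e2 \<and> px + (py - 1) = p1 + p2 - 1
        \<and> divdiff_coeff p1 p2 px \<noteq> 0"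
      using nz n2 unfolding x y
      by (auto simp: cT_pair_def Let_def psub_def psmul_def pz1_def pz2_def divdiff_def pdelta_def
          split: if_splits)
    then show ?thesis
      using lex 2 n1 n2 unfolding x y by (auto simp: divdiff_coeff_def split: if_splits)
  next
    case 3
    then have "xa = a1 \<and> xe = e1 \<and> ya = a2 \<and> ye = e2 \<and> px + py = p1 + (p2 + 1) - 1
        \<and> divdiff_coeff p1 (p2 + 1) px \<noteq> 0"
      using nz n2 unfolding x y
      by (auto simp: cT_pair_def Let_def psub_def psmul_def pz1_def pz2_def divdiff_def pdelta_def
          split: if_splits)
    then show ?thesis
      using lex 3 n1 n2 unfolding x y by (auto simp: divdiff_coeff_def split: if_splits)
  qed
qed

definition straightening :: "nat \<Rightarrow> fidx \<Rightarrow> fidx \<Rightarrow> ptensor" where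
  "straightening N x y = psub (cT_pair N (flip1 x y) (flip2 x y)) (sT_pair N (flip1 x y) (flip2 x y))"

lemma label_le_cases:
  assumes "1 \<le> N" "1 \<le> L" "valid_fidx N L (pl, al, el)" "valid_fidx N L (pm, am, em)"
    and "label N L (pl, al, el) \<le> label N L (pm, am, em)"
  obtains "pm = pl" "am = al" "el \<le> em" | "pm < pl \<or> (pm = pl \<and> am < al)"
proof -
  have "\<not> (pl < pm \<or> (pl = pm \<and> al < am) \<or> (pl = pm \<and> al = am \<and> em < el))"
    using assms(5) label_less_iff[OF assms(1,2,4,3)] by simp
  then show ?thesis
    using that by (metis linorder_neqE not_le)
qed

lemma straightening_same_position:
  assumes "e1 \<le> e2"
  shows "straightening N (p, a, e1) (p, a, e2) x y =
    (if e1 = e2 then - (1 + (qpar N)^2) * pdelta (p, a, e1) (p, a, e2) x y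
     else - pdelta (p, a, e1) (p, a, e2) x y - qpar N * pdelta (p, a, e2) (p, a, e1) x y)"
  using assms
  by (simp add: straightening_def psub_def cT_pair_same_position sT_pair_apply algebra_simps)

lemma straightening_nonzero_cases:
  assumes lex: "pm < pl \<or> (pm = pl \<and> am < al)"
    and nz: "straightening N (pl, al, el) (pm, am, em) x y \<noteq> 0"
    and ne: "(x, y) \<noteq> ((pl, al, el), (pm, am, em))"
  shows "(x, y) = ((pm, am, el), (pl, al, em)) \<and> el \<le> em
    \<or> (x, y) = ((pm, am, em), (pl, al, el))
    \<or> (\<exists>px py. x = (px, am, el) \<and> y = (py, al, em) \<and> pm < px \<and> (px < pl \<or> (px = pl \<and> am < al))
        \<and> (pm < py \<or> (pm = py \<and> am < al)) \<and> py < pl)"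
proof -
  let ?C = "cT_pair N (pm, am, el) (pl, al, em)" and ?S = "sT_pair N (pm, am, el) (pl, al, em)"
  have nz': "?C x y - ?S x y \<noteq> 0"
    using nz by (simp add: straightening_def psub_def)
  consider "(x, y) = ((pm, am, el), (pl, al, em))" | "(x, y) = ((pm, am, em), (pl, al, el))"
    | "(x, y) \<noteq> ((pm, am, el), (pl, al, em))" "(x, y) \<noteq> ((pm, am, em), (pl, al, el))"
    by blast
  then show ?thesis
  proof cases
    case 1
    then have "(qpar N)^2 - 1 - ?S (pm, am, el) (pl, al, em) \<noteq> 0"
      using nz' cT_pair_diag[OF lex] by simp
    then show ?thesis
      using 1 lex by (auto simp: sT_pair_apply pdelta_def split: if_splits)
  next
    case 3
    then have "?C x y \<noteq> 0"
      using nz' sT_pair_nonzero by (metis diff_zero)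
    then show ?thesis
      using cT_pair_nonzero_between[OF lex _ 3(1)] ne by blast
  qed simp
qed

lemma straightening_coeff_nonzero:
  assumes "1 \<le> N" "1 \<le> L" "valid_fidx N L (pl, al, el)" "valid_fidx N L (pm, am, em)"
    and "label N L (pl, al, el) \<le> label N L (pm, am, em)"
  shows "straightening N (pl, al, el) (pm, am, em) (pl, al, el) (pm, am, em) \<noteq> 0"
  using assms
proof (cases rule: label_le_cases)
  case 1
  then show ?thesis
    using one_plus_qpar_sq_nonzero[of N] by (auto simp: straightening_same_position pdelta_def)
next
  case 2
  then have "sT_pair N (pm, am, el) (pl, al, em) (pl, al, el) (pm, am, em) = 0"
    by (auto simp: sT_pair_apply pdelta_def)
  then show ?thesis
    using cT_pair_exchanged[OF 2, of N el em] qpar_nonzero[of N]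
    by (simp add: straightening_def psub_def)
qed

lemma straightening_nonzero_inside:
  assumes "1 \<le> N" "1 \<le> L" "valid_fidx N L (pl, al, el)" "valid_fidx N L (pm, am, em)"
    and "label N L (pl, al, el) \<le> label N L (pm, am, em)"
    and nz: "straightening N (pl, al, el) (pm, am, em) x y \<noteq> 0"
    and ne: "(x, y) \<noteq> ((pl, al, el), (pm, am, em))"
  shows "valid_fidx N L x \<and> valid_fidx N L y
    \<and> label N L (pl, al, el) < label N L x \<and> label N L x \<le> label N L (pm, am, em)
    \<and> label N L (pl, al, el) \<le> label N L y \<and> label N L y < label N L (pm, am, em)"
  using assms(1-5)
proof (cases rule: label_le_cases)
  have v: "valid_fidx N L (p, al, e)" "valid_fidx N L (p, am, e)" if "e = el \<or> e = em" for p e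
    using assms(3,4) that by (auto simp: valid_fidx_def)
  note less_iff = label_less_iff[OF assms(1,2)]
  {
    case 1
    then have "el < em \<and> x = (pl, al, em) \<and> y = (pl, al, el)"
      using nz ne by (auto simp: straightening_same_position pdelta_def split: if_splits)
    then show ?thesis
      using 1 v less_iff by auto
  next
    case 2
    from straightening_nonzero_cases[OF 2 nz ne] show ?thesis
      using 2 v less_iff by (auto simp: order_le_less)
  }
qed

lemma is_ptensor_straightening:
  "valid_fidx N L x \<Longrightarrow> valid_fidx N L y \<Longrightarrow> is_ptensor N L (straightening N x y)"
  unfolding straightening_def
  by (intro is_ptensor_psub is_ptensor_cT_pair is_ptensor_sT_pair)
    (cases x; cases y; simp add: valid_fidx_def)+

lemma straightening_in_relations:
  assumes k: "valid_idx N L n k" and i: "Suc i < n"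
  shows "embed_pair i k (straightening N (k ! i) (k ! Suc i)) \<in> relations N L n"
proof -
  let ?x = "flip1 (k ! i) (k ! Suc i)" and ?y = "flip2 (k ! i) (k ! Suc i)"
  have lk: "Suc i < length k"
    using k i by (simp add: valid_idx_def)
  have "valid_fidx N L (k ! i)" "valid_fidx N L (k ! Suc i)"
    using k i by (auto simp: valid_idx_iff)
  then have "valid_fidx N L ?x" "valid_fidx N L ?y"
    by (cases "k ! i"; cases "k ! Suc i"; simp add: valid_fidx_def)+
  then have kx: "valid_idx N L n (set_pair i k ?x ?y)"
    by (rule valid_idx_set_pair[OF k i])
  have "tsub (cT N L n i (tdelta (set_pair i k ?x ?y))) (sT N i (tdelta (set_pair i k ?x ?y)))
      = embed_pair i k (straightening N (k ! i) (k ! Suc i))"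
    unfolding cT_tdelta[OF kx i] sT_tdelta[of i "set_pair i k ?x ?y", simplified, OF lk]
    using lk by (simp add: tsub_embed straightening_def)
  then show ?thesis
    using relations_generator[OF kx i] by simp
qed

lemma tdelta_in_relations_if_leading:
  assumes Y: "Y \<in> relations N L n" "finite (tsupp Y)" "Y k \<noteq> 0"
    and others: "\<And>k'. Y k' \<noteq> 0 \<Longrightarrow> k' \<noteq> k \<Longrightarrow> tdelta k' \<in> relations N L n"
  shows "tdelta k \<in> relations N L n"
proof -
  define R where "R = (\<lambda>k''. \<Sum>k'\<in>tsupp Y - {k}. Y k' * tdelta k' k'')"
  have "R \<in> relations N L n"
    unfolding R_def
    using Y(2) others relations_smul[unfolded smul_def] by (intro relations_sum) (auto simp: tsupp_def)
  moreover have "R k'' = (if k'' \<in> tsupp Y - {k} then Y k'' else 0)" for k''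
    unfolding R_def tdelta_def using Y(2) by (simp add: sum.delta' mult.commute[of _ "if _ then _ else _"] if_distrib cong: if_cong)
  then have "tdelta k = smul (inverse (Y k)) (tsub Y R)"
    using Y(3) by (auto simp: tdelta_def smul_def tsub_def tsupp_def fun_eq_iff)
  ultimately show ?thesis
    using relations_smul relations_tsub Y(1) by metis
qed

abbreviation vanishes :: "nat \<Rightarrow> nat \<Rightarrow> int list \<Rightarrow> bool" where
  "vanishes N L ks \<equiv> tdelta (map (u_idx N L) ks) \<in> relations N L (length ks)"

lemma vanishes_pair_step:
  assumes NL: "1 \<le> N" "1 \<le> L" and "l \<le> m"
    and inner: "\<And>a b. l < a \<Longrightarrow> a \<le> m \<Longrightarrow> l \<le> b \<Longrightarrow> b < m \<Longrightarrow> vanishes N L (A @ [a, b] @ B)"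
  shows "vanishes N L (A @ [l, m] @ B)"
proof -
  let ?U = "u_idx N L" and ?i = "length A" and ?n = "length (A @ [l, m] @ B)"
  let ?k = "map ?U (A @ [l, m] @ B)"
  have lk: "Suc ?i < length ?k" and i: "Suc ?i < ?n"
    by simp_all
  have ki: "?k ! ?i = ?U l" "?k ! Suc ?i = ?U m"
    by (simp_all add: nth_append)
  obtain pl al el pm am em where ul: "?U l = (pl, al, el)" and um: "?U m = (pm, am, em)"
    by (cases "?U l"; cases "?U m") auto
  note valid = valid_u_idx(1)[OF NL, of l, unfolded ul] valid_u_idx(1)[OF NL, of m, unfolded um]
  have le: "label N L (pl, al, el) \<le> label N L (pm, am, em)"
    using valid_u_idx(2)[OF NL, of l] valid_u_idx(2)[OF NL, of m] ul um \<open>l \<le> m\<close> by simp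
  let ?Y = "embed_pair ?i ?k (straightening N (pl, al, el) (pm, am, em))"
  have k_eq: "?k = set_pair ?i ?k (pl, al, el) (pm, am, em)"
    using set_pair_self[OF lk] ki ul um by simp
  show ?thesis
  proof (rule tdelta_in_relations_if_leading)
    show "?Y \<in> relations N L ?n"
      using straightening_in_relations[OF valid_idx_map_u_idx[OF NL] i] ki ul um by simp
    show "finite (tsupp ?Y)"
      using is_tensor_embed_pair[OF valid_idx_map_u_idx[OF NL] i is_ptensor_straightening[OF valid]]
      by (simp add: is_tensor_def)
    show "?Y ?k \<noteq> 0"
      using straightening_coeff_nonzero[OF NL valid le] by (subst k_eq) (simp add: lk)
  next
    fix k'
    assume nz: "?Y k' \<noteq> 0" and ne: "k' \<noteq> ?k"
    then obtain x y where k': "k' = set_pair ?i ?k x y"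
      and nz': "straightening N (pl, al, el) (pm, am, em) x y \<noteq> 0"
      by (cases rule: embed_pair_cases[OF lk, of k']) auto
    have "(x, y) \<noteq> ((pl, al, el), (pm, am, em))"
      using ne k' k_eq by auto
    note inside = straightening_nonzero_inside[OF NL valid le nz' this]
    have "map ?U (A @ [label N L x, label N L y] @ B) = k'"
      unfolding k' using inside u_idx_label[OF NL] by (simp add: set_pair_def list_update_append)
    moreover have "vanishes N L (A @ [label N L x, label N L y] @ B)"
      using inner inside valid_u_idx(2)[OF NL] ul um by (metis (no_types, lifting))
    ultimately show "tdelta k' \<in> relations N L ?n"
      by simp
  qed
qed

lemma vanishes_run_end:
  assumes NL: "1 \<le> N" "1 \<le> L" and "l \<le> m"
    and shorter: "\<And>l' a A' B'. l' \<le> a \<Longrightarrow> a - l' < m - l \<Longrightarrow> vanishes N L (A' @ rev [l'..a] @ [a] @ B')"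
  shows "vanishes N L (A @ rev [l..m] @ [m] @ B)"
proof -
  have "vanishes N L ((A @ rev [l + 1..m]) @ [l, m] @ B)"
  proof (rule vanishes_pair_step[OF NL \<open>l \<le> m\<close>])
    fix a b
    assume "l < a" "a \<le> m"
    then have "[l + 1..m] = [l + 1..a] @ [a + 1..m]"
      using upto_split2 by simp
    moreover have "vanishes N L ((A @ rev [a + 1..m]) @ rev [l + 1..a] @ [a] @ b # B)"
      using shorter[of "l + 1" a "A @ rev [a + 1..m]" "b # B"] \<open>l < a\<close> \<open>a \<le> m\<close> by simp
    ultimately show "vanishes N L ((A @ rev [l + 1..m]) @ [a, b] @ B)"
      by simp
  qed
  moreover have "rev [l..m] @ [m] = rev [l + 1..m] @ [l, m]"
    using upto_rec1[OF \<open>l \<le> m\<close>] by simp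
  ultimately show ?thesis
    by (metis append.assoc)
qed

lemma vanishes_run_start:
  assumes NL: "1 \<le> N" "1 \<le> L" and "l \<le> m"
    and shorter: "\<And>b m' A' B'. b \<le> m' \<Longrightarrow> m' - b < m - l \<Longrightarrow> vanishes N L (A' @ [b] @ rev [b..m'] @ B')"
  shows "vanishes N L (A @ [l] @ rev [l..m] @ B)"
proof -
  have "vanishes N L (A @ [l, m] @ rev [l..m - 1] @ B)"
  proof (rule vanishes_pair_step[OF NL \<open>l \<le> m\<close>])
    fix a b
    assume "l \<le> b" "b < m"
    then have "[l..m - 1] = [l..b - 1] @ [b..m - 1]"
      using upto_split1 by simp
    moreover have "vanishes N L ((A @ [a]) @ [b] @ rev [b..m - 1] @ rev [l..b - 1] @ B)"
      using shorter[of b "m - 1" "A @ [a]" "rev [l..b - 1] @ B"] \<open>l \<le> b\<close> \<open>b < m\<close> by simp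
    ultimately show "vanishes N L (A @ [a, b] @ rev [l..m - 1] @ B)"
      by simp
  qed
  moreover have "[l] @ rev [l..m] = [l, m] @ rev [l..m - 1]"
    using upto_rec2[OF \<open>l \<le> m\<close>] by simp
  ultimately show ?thesis
    by (metis append.assoc)
qed

lemma vanishes_repeated_run:
  assumes NL: "1 \<le> N" "1 \<le> L" and "l \<le> m"
  shows "vanishes N L (A @ rev [l..m] @ [m] @ B) \<and> vanishes N L (A @ [l] @ rev [l..m] @ B)"
  using \<open>l \<le> m\<close>
proof (induction "nat (m - l)" arbitrary: l m A B rule: less_induct)
  case less
  have shorter: "nat (m' - l') < nat (m - l)" if "l' \<le> m'" "m' - l' < m - l" for l' m' :: int
    using that by simp
  show ?case
  proof
    show "vanishes N L (A @ rev [l..m] @ [m] @ B)"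
      using less(1)[OF shorter] by (intro vanishes_run_end[OF NL less(2)]) blast
    show "vanishes N L (A @ [l] @ rev [l..m] @ B)"
      using less(1)[OF shorter] by (intro vanishes_run_start[OF NL less(2)]) blast
  qed
qed

theorem mainTheorem2:
  fixes N L :: nat and l m :: int
  assumes "1 \<le> N" and "1 \<le> L" and "l \<le> m"
  shows "wedge_zero N L (rev [l..m] @ [m]) \<and> wedge_zero N L (l # rev [l..m])"
  using vanishes_repeated_run[OF assms, of "[]" "[]"] wedge_zero_if_relations by simp

end
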